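(* Let $(K,C,S)$ and $(K',C',S')$ be the associated layered simplicial complexes of divided simplicial complexes, and suppose that the polyhedra $X=|K|$ and $X'=|K'|$ are filtered spaces with respective singular sets $\Sigma=|S|$ and $\Sigma'=|S'|$ whose formal codimensions coincide. If there exists a layered formal deformation between $(K,C,S)$ and $(K',C',S')$, then $IH^{\bar p}_*(X)\cong IH^{\bar p}_*(X')$ for every perversity $\bar p$.
   Context: A simplicial complex $K$ is a set of finite nonempty sets (simplices) closed under passing to nonempty subsets (faces); $K^0$ is its vertex set; $t<s$ means proper face; $|K|$ is the geometric realization. A simplex is principal in $K$ if it is not a proper face of any simplex of $K$; $s$ is free in $K$ if it is a proper face of a principal simplex $p$ and of no other simplex of $K$. A layered simplicial complex is a triple $(K,C,S)$ with $C,S$ disjoint subcomplexes of $K$; $\mathrm{IM}(K,C,S)$ denotes simplices in neither $C$ nor $S$. A divided simplicial complex is $(K,S^0)$ with $S^0\subseteq K^0$; its associated layered complex $(K,C,S)$ has $S$ = simplices with all vertices in $S^0$, $C$ = simplices with all vertices in $K^0-S^0$. An elementary $S$-collapse replaces $(K,C,S)$ by $(K-\{s,p\},C,S-\{s,p\})$ with $p\in S$ principal in $K$ and $s$ a face of $p$ free in $K$; an elementary $C$-collapse is symmetric with $p\in C$. For $(K,C,S)$ associated to a divided complex, an elementary intermediate collapse replaces it by $(K-\{s,p\},C,S)$ where (i) $p\in\mathrm{IM}(K,C,S)$, (ii) $p$ is principal in $K$, (iii) $s$ is a face of $p$ free in $K$, (iv) every $t\in S$ with $t<p$ satisfies $t<s$.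 Elementary layered collapses are elementary $S$-, $C$- or intermediate collapses, and their inverses are elementary layered expansions; a layered formal deformation is a finite sequence of layered complexes, each obtained from the previous by an elementary layered collapse or expansion. A filtered space here is a pair $(X,\Sigma)$, $X$ Hausdorff, $\Sigma\subseteq X$ closed, with formal dimension $n$ and formal codimension $k=\operatorname{codim}_X\Sigma\ge1$. Its strata are the connected components of $X-\Sigma$ (codimension $0$) and of $\Sigma$ (codimension $k$). A perversity is a function $\bar p:\{0,1,2,\dots\}\to\mathbb Z$ with $\bar p(0)=0$. A singular $i$-simplex $\sigma:\Delta^i\to X$ is $\bar p$-allowable if for every stratum $Z$, $\sigma^{-1}(Z)$ is contained in the union of the $(i-\operatorname{codim}Z+\bar p(\operatorname{codim}Z))$-dimensional faces of $\Delta^i$. A singular chain is $\bar p$-allowable if every simplex with nonzero coefficient is. $IC^{\bar p}_i(X)\subseteq C_i(X;\mathbb Z)$ consists of chains $\xi$ with $\xi$ and $\partial\xi$ both $\bar p$-allowable; $IH^{\bar p}_i(X)$ is the homology of this subcomplex. *)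

theory Defs
  imports "HOL-Analysis.Analysis" "HOL-Homology.Homology"
begin

definition simplicial_complex :: "'v set set \<Rightarrow> bool" where
  "simplicial_complex K \<longleftrightarrow>
     (\<forall>s\<in>K. finite s \<and> s \<noteq> {}) \<and> (\<forall>s\<in>K. \<forall>t. t \<subseteq> s \<and> t \<noteq> {} \<longrightarrow> t \<in> K)"

definition subcomplex :: "'v set set \<Rightarrow> 'v set set \<Rightarrow> bool" where
  "subcomplex L K \<longleftrightarrow> L \<subseteq> K \<and> simplicial_complex L"

definition vertices :: "'v set set \<Rightarrow> 'v set" where
  "vertices K = \<Union>K"

definition principal :: "'v set set \<Rightarrow> 'v set \<Rightarrow> bool" where
  "principal K p \<longleftrightarrow> p \<in> K \<and> \<not> (\<exists>q\<in>K. p \<subset> q)"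

definition free_face :: "'v set set \<Rightarrow> 'v set \<Rightarrow> 'v set \<Rightarrow> bool" where
  "free_face K s p \<longleftrightarrow> principal K p \<and> s \<noteq> {} \<and> s \<subset> p \<and> (\<forall>q\<in>K. s \<subset> q \<longrightarrow> q = p)"

type_synonym 'v layered = "'v set set \<times> 'v set set \<times> 'v set set"

definition layered_complex :: "'v layered \<Rightarrow> bool" where
  "layered_complex L \<longleftrightarrow> (case L of (K, C, S) \<Rightarrow>
     simplicial_complex K \<and> subcomplex C K \<and> subcomplex S K \<and> C \<inter> S = {})"

definition IM :: "'v layered \<Rightarrow> 'v set set" where
  "IM L = (case L of (K, C, S) \<Rightarrow> K - C - S)"

definition S_part :: "'v set set \<Rightarrow> 'v set \<Rightarrow> 'v set set" where
  "S_part K S0 = {s\<in>K. s \<subseteq> S0}"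

definition C_part :: "'v set set \<Rightarrow> 'v set \<Rightarrow> 'v set set" where
  "C_part K S0 = {s\<in>K. s \<subseteq> vertices K - S0}"

definition assoc_layered :: "'v set set \<Rightarrow> 'v set \<Rightarrow> 'v layered" where
  "assoc_layered K S0 = (K, C_part K S0, S_part K S0)"

definition divided_complex :: "'v set set \<Rightarrow> 'v set \<Rightarrow> bool" where
  "divided_complex K S0 \<longleftrightarrow> simplicial_complex K \<and> S0 \<subseteq> vertices K"

definition is_assoc_divided :: "'v layered \<Rightarrow> bool" where
  "is_assoc_divided L \<longleftrightarrow> (\<exists>K S0. divided_complex K S0 \<and> L = assoc_layered K S0)"

definition elem_S_collapse :: "'v layered \<Rightarrow> 'v layered \<Rightarrow> bool" where
  "elem_S_collapse L L' \<longleftrightarrow> (case L of (K, C, S) \<Rightarrow>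
     (\<exists>s p. p \<in> S \<and> free_face K s p \<and> L' = (K - {s, p}, C, S - {s, p})))"

definition elem_C_collapse :: "'v layered \<Rightarrow> 'v layered \<Rightarrow> bool" where
  "elem_C_collapse L L' \<longleftrightarrow> (case L of (K, C, S) \<Rightarrow>
     (\<exists>s p. p \<in> C \<and> free_face K s p \<and> L' = (K - {s, p}, C - {s, p}, S)))"

definition elem_intermediate_collapse :: "'v layered \<Rightarrow> 'v layered \<Rightarrow> bool" where
  "elem_intermediate_collapse L L' \<longleftrightarrow> is_assoc_divided L \<and> (case L of (K, C, S) \<Rightarrow>
     (\<exists>s p. p \<in> IM L \<and> free_face K s p \<and> (\<forall>t\<in>S. t \<subset> p \<longrightarrow> t \<subset> s)
            \<and> L' = (K - {s, p}, C, S)))"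

definition elem_layered_collapse :: "'v layered \<Rightarrow> 'v layered \<Rightarrow> bool" where
  "elem_layered_collapse L L' \<longleftrightarrow>
     elem_S_collapse L L' \<or> elem_C_collapse L L' \<or> elem_intermediate_collapse L L'"

definition layered_formal_deformation :: "'v layered \<Rightarrow> 'v layered \<Rightarrow> bool" where
  "layered_formal_deformation L L' \<longleftrightarrow>
     (\<exists>xs. xs \<noteq> [] \<and> hd xs = L \<and> last xs = L' \<and> (\<forall>y\<in>set xs. layered_complex y) \<and>
        (\<forall>i. Suc i < length xs \<longrightarrow>
             elem_layered_collapse (xs ! i) (xs ! Suc i) \<or>
             elem_layered_collapse (xs ! Suc i) (xs ! i)))"

text \<open>Points of |K| are barycentric coordinate functions; a closed simplex carries the
  Euclidean topology and |K| carries the coherent (weak) topology.\<close>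
definition simplex_pts :: "'v set \<Rightarrow> ('v \<Rightarrow> real) set" where
  "simplex_pts s = {x. (\<forall>v. 0 \<le> x v) \<and> (\<forall>v. v \<notin> s \<longrightarrow> x v = 0) \<and> sum x s = 1}"

definition realization_set :: "'v set set \<Rightarrow> ('v \<Rightarrow> real) set" where
  "realization_set K = (\<Union>s\<in>K. simplex_pts s)"

definition realization_open :: "'v set set \<Rightarrow> ('v \<Rightarrow> real) set \<Rightarrow> bool" where
  "realization_open K U \<longleftrightarrow> U \<subseteq> realization_set K \<and>
     (\<forall>s\<in>K. openin (subtopology (powertop_real UNIV) (simplex_pts s)) (U \<inter> simplex_pts s))"

lemma istopology_realization_open: "istopology (realization_open K)"
  unfolding istopology_def realization_open_def
proof (intro conjI allI impI ballI)
  fix S T assume "S \<subseteq> realization_set K \<and> (\<forall>s\<in>K. openin (subtopology (powertop_real UNIV) (simplex_pts s)) (S \<inter> simplex_pts s))"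
    and "T \<subseteq> realization_set K \<and> (\<forall>s\<in>K. openin (subtopology (powertop_real UNIV) (simplex_pts s)) (T \<inter> simplex_pts s))"
  then show "S \<inter> T \<subseteq> realization_set K" by blast
  fix s assume s: "s \<in> K"
  have "S \<inter> T \<inter> simplex_pts s = (S \<inter> simplex_pts s) \<inter> (T \<inter> simplex_pts s)" by blast
  then show "openin (subtopology (powertop_real UNIV) (simplex_pts s)) (S \<inter> T \<inter> simplex_pts s)"
    using s \<open>S \<subseteq> _ \<and> _\<close> \<open>T \<subseteq> _ \<and> _\<close> by (metis openin_Int)
next
  fix \<K> assume H: "\<forall>S\<in>\<K>. S \<subseteq> realization_set K \<and> (\<forall>s\<in>K. openin (subtopology (powertop_real UNIV) (simplex_pts s)) (S \<inter> simplex_pts s))"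
  then show "\<Union>\<K> \<subseteq> realization_set K" by blast
  fix s assume s: "s \<in> K"
  have "\<Union>\<K> \<inter> simplex_pts s = \<Union>((\<lambda>S. S \<inter> simplex_pts s) ` \<K>)" by blast
  then show "openin (subtopology (powertop_real UNIV) (simplex_pts s)) (\<Union>\<K> \<inter> simplex_pts s)"
    using H s by (metis (no_types, lifting) imageE openin_Union)
qed

definition realization :: "'v set set \<Rightarrow> ('v \<Rightarrow> real) topology" where
  "realization K = topology (realization_open K)"

text \<open>A filtered space (X, \<Sigma>) with formal dimension n and formal codimension k.\<close>
definition filtered_space :: "'a topology \<Rightarrow> 'a set \<Rightarrow> nat \<Rightarrow> nat \<Rightarrow> bool" where
  "filtered_space X \<Sigma> n k \<longleftrightarrow> Hausdorff_space X \<and> closedin X \<Sigma> \<and> 1 \<le> k"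

text \<open>Strata paired with their codimension.\<close>
definition strata :: "'a topology \<Rightarrow> 'a set \<Rightarrow> nat \<Rightarrow> ('a set \<times> nat) set" where
  "strata X \<Sigma> k =
     (\<lambda>Z. (Z, 0)) ` connected_components_of (subtopology X (topspace X - \<Sigma>)) \<union>
     (\<lambda>Z. (Z, k)) ` connected_components_of (subtopology X \<Sigma>)"

definition perversity :: "(nat \<Rightarrow> int) \<Rightarrow> bool" where
  "perversity p \<longleftrightarrow> p 0 = 0"

text \<open>Union of the j-dimensional faces of the standard i-simplex (empty if j < 0).\<close>
definition skeleton_std :: "nat \<Rightarrow> int \<Rightarrow> (nat \<Rightarrow> real) set" where
  "skeleton_std i j = {x \<in> standard_simplex i. int (card {l. l \<le> i \<and> x l \<noteq> 0}) \<le> j + 1}"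

definition allowable_simplex ::
  "(nat \<Rightarrow> int) \<Rightarrow> 'a topology \<Rightarrow> 'a set \<Rightarrow> nat \<Rightarrow> nat \<Rightarrow> ((nat \<Rightarrow> real) \<Rightarrow> 'a) \<Rightarrow> bool" where
  "allowable_simplex p X \<Sigma> k i \<sigma> \<longleftrightarrow>
     (\<forall>(Z, c) \<in> strata X \<Sigma> k.
        {x \<in> standard_simplex i. \<sigma> x \<in> Z} \<subseteq> skeleton_std i (int i - int c + p c))"

definition allowable_chain ::
  "(nat \<Rightarrow> int) \<Rightarrow> 'a topology \<Rightarrow> 'a set \<Rightarrow> nat \<Rightarrow> nat \<Rightarrow> 'a chain \<Rightarrow> bool" where
  "allowable_chain p X \<Sigma> k i \<xi> \<longleftrightarrow> (\<forall>\<sigma> \<in> Poly_Mapping.keys \<xi>. allowable_simplex p X \<Sigma> k i \<sigma>)"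

definition IC_set :: "(nat \<Rightarrow> int) \<Rightarrow> 'a topology \<Rightarrow> 'a set \<Rightarrow> nat \<Rightarrow> nat \<Rightarrow> 'a chain set" where
  "IC_set p X \<Sigma> k i = {\<xi>. singular_chain i X \<xi> \<and> allowable_chain p X \<Sigma> k i \<xi> \<and>
        allowable_chain p X \<Sigma> k (i - 1) (chain_boundary i \<xi>)}"

definition IC_cycles :: "(nat \<Rightarrow> int) \<Rightarrow> 'a topology \<Rightarrow> 'a set \<Rightarrow> nat \<Rightarrow> nat \<Rightarrow> 'a chain set" where
  "IC_cycles p X \<Sigma> k i = {\<xi> \<in> IC_set p X \<Sigma> k i. chain_boundary i \<xi> = 0}"

definition IC_boundaries :: "(nat \<Rightarrow> int) \<Rightarrow> 'a topology \<Rightarrow> 'a set \<Rightarrow> nat \<Rightarrow> nat \<Rightarrow> 'a chain set" where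
  "IC_boundaries p X \<Sigma> k i = chain_boundary (Suc i) ` IC_set p X \<Sigma> k (Suc i)"

definition IH :: "(nat \<Rightarrow> int) \<Rightarrow> nat \<Rightarrow> 'a topology \<Rightarrow> 'a set \<Rightarrow> nat \<Rightarrow> 'a chain set monoid" where
  "IH p i X \<Sigma> k =
     subgroup_generated (chain_group i X) (IC_cycles p X \<Sigma> k i) Mod IC_boundaries p X \<Sigma> k i"

end

theory Submission
  imports Defs
begin

text \<open>An elementary collapse of a free face \<open>s\<close> of a principal simplex \<open>p\<close> is realised by a
  deformation retraction of \<open>|K|\<close> onto \<open>|K - {s, p}|\<close> that pushes barycentric mass from the
  vertices of \<open>s\<close> to the remaining vertex of \<open>p\<close>. For each of the three kinds of layered
  collapse this deformation never moves a point into or out of \<open>|S|\<close>. A homotopy with this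
  property maps allowable singular chains to allowable ones, and so does the prism operator
  built from it, because every simplex of the prism lies over a degeneracy of its base simplex.
  Hence the retraction and the inclusion induce mutually inverse isomorphisms of \<open>IH\<^sup>p\<close>,
  and a layered formal deformation, being a chain of such steps, preserves \<open>IH\<^sup>p\<close>.\<close>

section \<open>The prism operator\<close>

text \<open>A point of \<open>[0,1] \<times> \<Delta>\<^sup>q\<close> is encoded as \<open>z :: nat \<Rightarrow> real\<close> with time \<open>z 0\<close> and
  base point \<open>z \<circ> Suc\<close>. The \<open>i\<close>-th simplex of the standard triangulation of the cylinder has
  the vertices \<open>(0, e\<^sub>0), \<dots>, (0, e\<^sub>i), (1, e\<^sub>i), \<dots>, (1, e\<^sub>q)\<close>.\<close>

definition cylinder :: "nat \<Rightarrow> (nat \<Rightarrow> real) set" where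
  "cylinder q = {z. z 0 \<in> {0..1} \<and> z \<circ> Suc \<in> standard_simplex q}"

definition cylinder_vertex :: "real \<Rightarrow> nat \<Rightarrow> nat \<Rightarrow> real" where
  "cylinder_vertex t j = (\<lambda>n. if n = 0 then t else if n = Suc j then 1 else 0)"

definition prism_vertices :: "nat \<Rightarrow> nat \<Rightarrow> nat \<Rightarrow> real" where
  "prism_vertices i j = (if j \<le> i then cylinder_vertex 0 j else cylinder_vertex 1 (j - 1))"

definition prism_simplex :: "nat \<Rightarrow> nat \<Rightarrow> (nat \<Rightarrow> real) \<Rightarrow> nat \<Rightarrow> real" where
  "prism_simplex q i = oriented_simplex (Suc q) (prism_vertices i)"

definition simplicial_degeneracy :: "nat \<Rightarrow> (nat \<Rightarrow> real) \<Rightarrow> nat \<Rightarrow> real" where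
  "simplicial_degeneracy i x =
     (\<lambda>n. if n < i then x n else if n = i then x i + x (Suc i) else x (Suc n))"

definition cylinder_face :: "nat \<Rightarrow> (nat \<Rightarrow> real) \<Rightarrow> nat \<Rightarrow> real" where
  "cylinder_face k z = (\<lambda>n. if n = 0 then z 0 else simplical_face k (z \<circ> Suc) (n - 1))"

definition prism_map :: "(real \<times> 'a \<Rightarrow> 'b) \<Rightarrow> ((nat \<Rightarrow> real) \<Rightarrow> 'a) \<Rightarrow> (nat \<Rightarrow> real) \<Rightarrow> 'b" where
  "prism_map h \<sigma> z = h (z 0, \<sigma> (z \<circ> Suc))"

definition prism :: "(real \<times> 'a \<Rightarrow> 'b) \<Rightarrow> nat \<Rightarrow> ((nat \<Rightarrow> real) \<Rightarrow> 'a) \<Rightarrow> 'b chain" where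
  "prism h q \<sigma> = (\<Sum>i\<le>q. frag_cmul ((-1) ^ i)
                     (frag_of (simplex_map (Suc q) (prism_map h \<sigma>) (prism_simplex q i))))"

lemma prism_simplex_time:
  assumes "x \<in> standard_simplex (Suc q)"
  shows "prism_simplex q i x 0 \<in> {0..1}"
proof -
  have "prism_simplex q i x 0 = (\<Sum>j\<le>Suc q. (if j \<le> i then 0 else 1) * x j)"
    using assms by (simp add: prism_simplex_def oriented_simplex_def prism_vertices_def cylinder_vertex_def
        if_distrib [of "\<lambda>f. f 0"] cong: if_cong)
  moreover have "(\<Sum>j\<le>Suc q. (if j \<le> i then 0 else 1) * x j) \<le> (\<Sum>j\<le>Suc q. x j)"
    using assms by (intro sum_mono) (simp add: standard_simplex_def)
  moreover have "0 \<le> (\<Sum>j\<le>Suc q. (if j \<le> i then 0 else 1) * x j)"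
    using assms by (intro sum_nonneg) (simp add: standard_simplex_def)
  ultimately show ?thesis
    using assms by (simp add: standard_simplex_def)
qed

lemma prism_simplex_base:
  assumes "x \<in> standard_simplex (Suc q)"
  shows "prism_simplex q i x \<circ> Suc = simplicial_degeneracy i x"
proof
  fix n
  have "(prism_simplex q i x \<circ> Suc) n = (\<Sum>j\<le>Suc q. prism_vertices i j (Suc n) * x j)"
    using assms by (simp add: prism_simplex_def oriented_simplex_def)
  also have "\<dots> = (\<Sum>j\<le>Suc q. (if j = n then (if n \<le> i then x n else 0) else 0)
                    + (if j = Suc n then (if i < Suc n then x (Suc n) else 0) else 0))"
    by (intro sum.cong) (auto simp: prism_vertices_def cylinder_vertex_def)
  also have "\<dots> = simplicial_degeneracy i x n"
    using assms by (auto simp: sum.distrib simplicial_degeneracy_def standard_simplex_def)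
  finally show "(prism_simplex q i x \<circ> Suc) n = simplicial_degeneracy i x n" .
qed

lemma sum_simplicial_degeneracy:
  assumes "i \<le> q"
  shows "(\<Sum>n\<le>q. simplicial_degeneracy i x n) = (\<Sum>n\<le>Suc q. x n)"
proof -
  define skip where "skip n = (if n < i then n else Suc n)" for n
  have "{..Suc q} = insert i (skip ` {..q})"
  proof -
    have "l \<in> skip ` {..q}" if "l \<le> Suc q" "l \<noteq> i" for l
      using that assms by (cases "l < i") (auto simp: skip_def image_iff intro: bexI [of _ "l - 1"])
    then show ?thesis
      using assms by (auto simp: skip_def)
  qed
  moreover have "inj_on skip {..q}" "i \<notin> skip ` {..q}"
    by (auto simp: skip_def inj_on_def)
  ultimately have "(\<Sum>n\<le>Suc q. x n) = x i + (\<Sum>n\<le>q. x (skip n))"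
    by (simp add: sum.reindex)
  also have "\<dots> = (\<Sum>n\<le>q. x (skip n) + (if n = i then x i else 0))"
    using assms by (simp add: sum.distrib)
  also have "\<dots> = (\<Sum>n\<le>q. simplicial_degeneracy i x n)"
    by (intro sum.cong) (auto simp: simplicial_degeneracy_def skip_def)
  finally show ?thesis ..
qed

lemma simplicial_degeneracy_in_standard_simplex:
  assumes "i \<le> q" and x: "x \<in> standard_simplex (Suc q)"
  shows "simplicial_degeneracy i x \<in> standard_simplex q"
proof -
  let ?d = "simplicial_degeneracy i x"
  have nonneg: "0 \<le> ?d n" for n
    using x by (simp add: simplicial_degeneracy_def standard_simplex_def)
  have sum1: "(\<Sum>n\<le>q. ?d n) = 1"
    using x by (simp add: sum_simplicial_degeneracy [OF \<open>i \<le> q\<close>] standard_simplex_def)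
  have "?d n \<le> 1" for n
  proof (cases "n \<le> q")
    case True
    then show ?thesis
      using member_le_sum [of n "{..q}" ?d] nonneg sum1 by simp
  next
    case False
    then show ?thesis
      using x \<open>i \<le> q\<close> by (simp add: simplicial_degeneracy_def standard_simplex_def)
  qed
  moreover have "?d n = 0" if "q < n" for n
    using x \<open>i \<le> q\<close> that by (simp add: simplicial_degeneracy_def standard_simplex_def)
  ultimately show ?thesis
    using nonneg sum1 by (simp add: standard_simplex_def)
qed

lemma card_support_le_simplicial_degeneracy:
  assumes "i \<le> q" and x: "x \<in> standard_simplex (Suc q)"
  shows "card {l. l \<le> Suc q \<and> x l \<noteq> 0}
           \<le> card {n. n \<le> q \<and> simplicial_degeneracy i x n \<noteq> 0} + 1"
proof -
  define A where "A = {l. l \<le> Suc q \<and> x l \<noteq> 0}"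
  define B where "B = {n. n \<le> q \<and> simplicial_degeneracy i x n \<noteq> 0}"
  define merge where "merge l = (if l \<le> i then l else l - 1)" for l
  have "inj_on merge (A - {Suc i})"
    by (auto simp: merge_def inj_on_def)
  moreover have "merge l \<in> B" if "l \<in> A" "l \<noteq> Suc i" for l
  proof -
    have "0 \<le> x i" "0 \<le> x (Suc i)"
      using x by (simp_all add: standard_simplex_def)
    then show ?thesis
      using that \<open>i \<le> q\<close> by (auto simp: A_def B_def merge_def simplicial_degeneracy_def)
  qed
  ultimately have "card (A - {Suc i}) \<le> card B"
    by (intro card_inj_on_le) (auto simp: B_def)
  moreover have "card A \<le> card (A - {Suc i}) + 1"
    by (cases "Suc i \<in> A") (simp_all add: A_def card_Suc_Diff1 [symmetric])
  ultimately show ?thesis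
    unfolding A_def B_def by linarith
qed

lemma prism_simplex_in_cylinder:
  assumes "i \<le> q"
  shows "simplicial_simplex (Suc q) (cylinder q) (prism_simplex q i)"
  using prism_simplex_time prism_simplex_base simplicial_degeneracy_in_standard_simplex [OF assms]
  by (auto simp: simplicial_simplex prism_simplex_def cylinder_def)

lemma oriented_simplex_cylinder_vertex:
  assumes "x \<in> standard_simplex q"
  shows "oriented_simplex q (cylinder_vertex t) x = (\<lambda>n. if n = 0 then t else x (n - 1))"
proof
  fix n
  show "oriented_simplex q (cylinder_vertex t) x n = (if n = 0 then t else x (n - 1))"
  proof (cases n)
    case 0
    then show ?thesis
      using assms by (simp add: oriented_simplex_def cylinder_vertex_def standard_simplex_def
          flip: sum_distrib_left)
  next
    case (Suc m)
    then show ?thesis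
      using assms by (auto simp: oriented_simplex_def cylinder_vertex_def standard_simplex_def
          if_distrib [of "\<lambda>a. a * _"] cong: if_cong)
  qed
qed

lemma cylinder_face_cylinder_vertex:
  "cylinder_face k (cylinder_vertex t j) = cylinder_vertex t (if j < k then j else Suc j)"
  by (rule ext) (auto simp: cylinder_face_def cylinder_vertex_def simplical_face_def)

lemma oriented_simplex_cylinder_face:
  assumes "x \<in> standard_simplex p"
  shows "oriented_simplex p (cylinder_face k \<circ> l) x = cylinder_face k (oriented_simplex p l x)"
  using assms
  by (auto simp: oriented_simplex_def cylinder_face_def simplical_face_def
      if_distrib [of "\<lambda>a. a * _"] cong: if_cong)

lemma prism_map_cylinder_face:
  assumes "z \<circ> Suc \<in> standard_simplex (q - 1)"
  shows "prism_map h \<sigma> (cylinder_face k z) = prism_map h (singular_face q k \<sigma>) z"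
proof -
  have "cylinder_face k z \<circ> Suc = simplical_face k (z \<circ> Suc)"
    by (auto simp: cylinder_face_def)
  then show ?thesis
    using assms by (simp add: prism_map_def singular_face_def cylinder_face_def)
qed

lemma simplex_map_prism_map_cylinder_face:
  assumes "\<And>x. x \<in> standard_simplex q \<Longrightarrow> oriented_simplex q l x \<circ> Suc \<in> standard_simplex (q - 1)"
  shows "simplex_map q (prism_map h \<sigma>) (oriented_simplex q (cylinder_face k \<circ> l))
       = simplex_map q (prism_map h (singular_face q k \<sigma>)) (oriented_simplex q l)"
  unfolding simplex_map_def
proof (rule restrict_ext)
  fix x
  assume x: "x \<in> standard_simplex q"
  show "(prism_map h \<sigma> \<circ> oriented_simplex q (cylinder_face k \<circ> l)) x
      = (prism_map h (singular_face q k \<sigma>) \<circ> oriented_simplex q l) x"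
    by (simp add: oriented_simplex_cylinder_face [OF x] prism_map_cylinder_face [OF assms [OF x]])
qed

lemma prism_simplex_face_top:
  "singular_face (Suc q) 0 (prism_simplex q 0) = oriented_simplex q (cylinder_vertex 1)"
  by (simp add: prism_simplex_def singular_face_oriented_simplex prism_vertices_def)

lemma prism_simplex_face_bottom:
  "singular_face (Suc q) (Suc q) (prism_simplex q q) = oriented_simplex q (cylinder_vertex 0)"
  by (simp add: prism_simplex_def singular_face_oriented_simplex prism_vertices_def oriented_simplex_eq)

lemma prism_simplex_face_cancel:
  assumes "i \<le> q"
  shows "singular_face (Suc q) (Suc i) (prism_simplex q i)
       = singular_face (Suc q) (Suc i) (prism_simplex q (Suc i))"
  using assms
  by (simp add: prism_simplex_def singular_face_oriented_simplex)
     (auto intro!: arg_cong [where f = "oriented_simplex q"] simp: prism_vertices_def)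

lemma prism_simplex_face_lower:
  assumes "k < i" "i \<le> q"
  shows "singular_face (Suc q) k (prism_simplex q i)
       = oriented_simplex q (cylinder_face k \<circ> prism_vertices (i - 1))"
  using assms
  by (auto simp: prism_simplex_def singular_face_oriented_simplex prism_vertices_def
      cylinder_face_cylinder_vertex oriented_simplex_eq)

lemma prism_simplex_face_upper:
  assumes "Suc i < k" "k \<le> Suc q"
  shows "singular_face (Suc q) k (prism_simplex q i)
       = oriented_simplex q (cylinder_face (k - 1) \<circ> prism_vertices i)"
  using assms
  by (auto simp: prism_simplex_def singular_face_oriented_simplex prism_vertices_def
      cylinder_face_cylinder_vertex oriented_simplex_eq)

lemma sum_telescope_pairs:
  fixes a b :: "nat \<Rightarrow> 'a::ab_group_add"
  assumes "\<And>i. i < n \<Longrightarrow> a (Suc i) = - b i"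
  shows "(\<Sum>i\<le>n. a i + b i) = a 0 + b n"
  using assms by (induction n) (simp_all add: algebra_simps)

lemma sum_atMost_Suc_split_pair:
  assumes "i \<le> q"
  shows "(\<Sum>k\<le>Suc q. f k) = (\<Sum>k<i. f k) + (f i + f (Suc i)) + (\<Sum>k\<in>{Suc (Suc i)..Suc q}. f k)"
proof -
  have "{..Suc q} = ({..<i} \<union> {i, Suc i}) \<union> {Suc (Suc i)..Suc q}"
    using assms by auto
  moreover have "sum f (({..<i} \<union> {i, Suc i}) \<union> {Suc (Suc i)..Suc q})
      = sum f ({..<i} \<union> {i, Suc i}) + sum f {Suc (Suc i)..Suc q}"
    by (rule sum.union_disjoint) auto
  moreover have "sum f ({..<i} \<union> {i, Suc i}) = sum f {..<i} + sum f {i, Suc i}"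
    by (rule sum.union_disjoint) auto
  ultimately show ?thesis
    by simp
qed

lemma singular_face_simplex_map_Suc:
  assumes "k \<le> Suc q"
  shows "singular_face (Suc q) k (simplex_map (Suc q) f c) = simplex_map q f (singular_face (Suc q) k c)"
  using assms
  by (simp add: singular_face_simplex_map) (auto simp: simplex_map_def singular_face_def intro!: restrict_ext)

lemma simplex_map_prism_map_face:
  assumes "i < q"
  shows "simplex_map q (prism_map h \<sigma>) (oriented_simplex q (cylinder_face k \<circ> prism_vertices i))
       = simplex_map q (prism_map h (singular_face q k \<sigma>)) (prism_simplex (q - 1) i)"
proof -
  obtain r where q: "q = Suc r"
    using assms not0_implies_Suc by fastforce
  have "oriented_simplex q (prism_vertices i) x \<circ> Suc \<in> standard_simplex (q - 1)"
    if "x \<in> standard_simplex q" for x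
    using that assms q prism_simplex_base [of x r i] simplicial_degeneracy_in_standard_simplex [of i r x]
    by (simp add: prism_simplex_def)
  then show ?thesis
    using q by (simp add: simplex_map_prism_map_cylinder_face prism_simplex_def)
qed

definition prism_boundary_term ::
    "(real \<times> 'a \<Rightarrow> 'b) \<Rightarrow> ((nat \<Rightarrow> real) \<Rightarrow> 'a) \<Rightarrow> nat \<Rightarrow> nat \<Rightarrow> nat \<Rightarrow> 'b chain" where
  "prism_boundary_term h \<sigma> q i k = frag_cmul ((-1) ^ (i + k))
     (frag_of (simplex_map q (prism_map h \<sigma>) (singular_face (Suc q) k (prism_simplex q i))))"

definition face_prism_term ::
    "(real \<times> 'a \<Rightarrow> 'b) \<Rightarrow> ((nat \<Rightarrow> real) \<Rightarrow> 'a) \<Rightarrow> nat \<Rightarrow> nat \<Rightarrow> nat \<Rightarrow> 'b chain" where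
  "face_prism_term h \<sigma> q i k = frag_cmul ((-1) ^ (i + k))
     (frag_of (simplex_map q (prism_map h (singular_face q k \<sigma>)) (prism_simplex (q - 1) i)))"

lemma chain_boundary_prism_eq_sum:
  "chain_boundary (Suc q) (prism h q \<sigma>) = (\<Sum>i\<le>q. \<Sum>k\<le>Suc q. prism_boundary_term h \<sigma> q i k)"
  by (simp add: prism_def prism_boundary_term_def chain_boundary_sum chain_boundary_cmul chain_boundary_of
      singular_face_simplex_map_Suc frag_cmul_sum power_add del: sum.atMost_Suc)

lemma prism_boundary_terms_diagonal:
  "(\<Sum>i\<le>q. prism_boundary_term h \<sigma> q i i + prism_boundary_term h \<sigma> q i (Suc i))
     = frag_of (simplex_map q (\<lambda>x. h (1, x)) \<sigma>) - frag_of (simplex_map q (\<lambda>x. h (0, x)) \<sigma>)"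
proof -
  have "(\<Sum>i\<le>q. prism_boundary_term h \<sigma> q i i + prism_boundary_term h \<sigma> q i (Suc i))
      = prism_boundary_term h \<sigma> q 0 0 + prism_boundary_term h \<sigma> q q (Suc q)"
    by (rule sum_telescope_pairs) (simp add: prism_boundary_term_def prism_simplex_face_cancel)
  also have "prism_boundary_term h \<sigma> q 0 0 = frag_of (simplex_map q (\<lambda>x. h (1, x)) \<sigma>)"
    by (simp add: prism_boundary_term_def prism_simplex_face_top simplex_map_def
        oriented_simplex_cylinder_vertex prism_map_def o_def cong: restrict_cong)
  also have "prism_boundary_term h \<sigma> q q (Suc q) = - frag_of (simplex_map q (\<lambda>x. h (0, x)) \<sigma>)"
    by (simp add: prism_boundary_term_def prism_simplex_face_bottom simplex_map_def
        oriented_simplex_cylinder_vertex prism_map_def o_def cong: restrict_cong)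
  finally show ?thesis
    by simp
qed

lemma prism_boundary_terms_lower:
  "(\<Sum>i\<le>q. \<Sum>k<i. prism_boundary_term h \<sigma> q i k) = - (\<Sum>i<q. \<Sum>k\<le>i. face_prism_term h \<sigma> q i k)"
proof -
  have "(\<Sum>i\<le>q. \<Sum>k<i. prism_boundary_term h \<sigma> q i k) = (\<Sum>i<Suc q. \<Sum>k<i. prism_boundary_term h \<sigma> q i k)"
    by (simp only: lessThan_Suc_atMost)
  also have "\<dots> = (\<Sum>i<q. \<Sum>k\<le>i. prism_boundary_term h \<sigma> q (Suc i) k)"
    by (subst sum.lessThan_Suc_shift) (simp add: lessThan_Suc_atMost)
  also have "\<dots> = - (\<Sum>i<q. \<Sum>k\<le>i. face_prism_term h \<sigma> q i k)"
    by (simp add: prism_boundary_term_def face_prism_term_def prism_simplex_face_lower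
        simplex_map_prism_map_face flip: sum_negf)
  finally show ?thesis .
qed

lemma prism_boundary_terms_upper:
  "(\<Sum>i\<le>q. \<Sum>k\<in>{Suc (Suc i)..Suc q}. prism_boundary_term h \<sigma> q i k)
     = - (\<Sum>i<q. \<Sum>k\<in>{Suc i..q}. face_prism_term h \<sigma> q i k)"
proof -
  have "(\<Sum>i\<le>q. \<Sum>k\<in>{Suc (Suc i)..Suc q}. prism_boundary_term h \<sigma> q i k)
      = (\<Sum>i<q. \<Sum>k\<in>{Suc i..q}. prism_boundary_term h \<sigma> q i (Suc k))"
    by (simp add: sum.shift_bounds_cl_Suc_ivl flip: lessThan_Suc_atMost del: sum.cl_ivl_Suc)
  also have "\<dots> = - (\<Sum>i<q. \<Sum>k\<in>{Suc i..q}. face_prism_term h \<sigma> q i k)"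
    by (simp add: prism_boundary_term_def face_prism_term_def prism_simplex_face_upper
        simplex_map_prism_map_face flip: sum_negf)
  finally show ?thesis .
qed

lemma prism_chain_boundary_of:
  "frag_extend (prism h (q - 1)) (chain_boundary q (frag_of \<sigma>)) = (\<Sum>i<q. \<Sum>k\<le>q. face_prism_term h \<sigma> q i k)"
proof (cases q)
  case (Suc r)
  then show ?thesis
    by (simp add: face_prism_term_def chain_boundary_of prism_def frag_extend_sum frag_extend_cmul
        frag_cmul_sum power_add lessThan_Suc_atMost sum.swap [of _ "{..r}"] mult.commute del: sum.atMost_Suc)
qed (simp add: chain_boundary_def)

text \<open>The face \<open>Suc i\<close> of the \<open>i\<close>-th prism simplex cancels against the same face of the
  \<open>Suc i\<close>-th one; of the remaining faces, two are the ends of the cylinder and the others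
  make up the prism over the boundary of \<open>\<sigma>\<close>.\<close>

lemma chain_boundary_prism:
  "chain_boundary (Suc q) (prism h q \<sigma>) =
     frag_of (simplex_map q (\<lambda>x. h (1, x)) \<sigma>) - frag_of (simplex_map q (\<lambda>x. h (0, x)) \<sigma>)
     - frag_extend (prism h (q - 1)) (chain_boundary q (frag_of \<sigma>))"
proof -
  let ?T = "prism_boundary_term h \<sigma> q" and ?G = "face_prism_term h \<sigma> q"
  have "chain_boundary (Suc q) (prism h q \<sigma>)
      = (\<Sum>i\<le>q. (\<Sum>k<i. ?T i k) + (?T i i + ?T i (Suc i)) + (\<Sum>k\<in>{Suc (Suc i)..Suc q}. ?T i k))"
    unfolding chain_boundary_prism_eq_sum by (intro sum.cong refl sum_atMost_Suc_split_pair) simp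
  also have "\<dots> = (\<Sum>i\<le>q. \<Sum>k<i. ?T i k) + (\<Sum>i\<le>q. ?T i i + ?T i (Suc i))
                  + (\<Sum>i\<le>q. \<Sum>k\<in>{Suc (Suc i)..Suc q}. ?T i k)"
    by (simp add: sum.distrib)
  also have "(\<Sum>i<q. \<Sum>k\<le>i. ?G i k) + (\<Sum>i<q. \<Sum>k\<in>{Suc i..q}. ?G i k) = (\<Sum>i<q. \<Sum>k\<le>q. ?G i k)"
  proof -
    have "{..q} = {..i} \<union> {Suc i..q}" if "i < q" for i
      using that by auto
    then show ?thesis
      by (simp add: sum.union_disjoint flip: sum.distrib del: sum.atMost_Suc sum.cl_ivl_Suc)
  qed
  ultimately show ?thesis
    unfolding prism_boundary_terms_diagonal prism_boundary_terms_lower prism_boundary_terms_upper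
      prism_chain_boundary_of by (simp add: algebra_simps)
qed

lemma chain_boundary_prism_chain:
  "chain_boundary (Suc q) (frag_extend (prism h q) c) =
     chain_map q (\<lambda>x. h (1, x)) c - chain_map q (\<lambda>x. h (0, x)) c
     - frag_extend (prism h (q - 1)) (chain_boundary q c)"
proof (induction c rule: frag_induction [OF subset_UNIV])
  case (3 a b)
  then show ?case
    by (simp add: chain_boundary_diff chain_map_diff frag_extend_diff)
qed (simp_all add: chain_boundary_prism)

lemma continuous_map_prism_map:
  assumes h: "continuous_map (prod_topology (top_of_set {0..1::real}) X) Y h"
    and \<sigma>: "singular_simplex q X \<sigma>"
  shows "continuous_map (subtopology (powertop_real UNIV) (cylinder q)) Y (prism_map h \<sigma>)"
proof -
  let ?Z = "subtopology (powertop_real UNIV) (cylinder q)"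
  have time: "continuous_map ?Z (top_of_set {0..1}) (\<lambda>z. z 0)"
    by (auto simp: continuous_map_in_subtopology cylinder_def
        intro: continuous_map_product_projection continuous_map_from_subtopology)
  have "continuous_map ?Z (subtopology (powertop_real UNIV) (standard_simplex q)) (\<lambda>z. z \<circ> Suc)"
    by (auto simp: continuous_map_in_subtopology o_def continuous_map_componentwise_UNIV cylinder_def
        intro: continuous_map_product_projection continuous_map_from_subtopology)
  then have base: "continuous_map ?Z X (\<lambda>z. \<sigma> (z \<circ> Suc))"
    using \<sigma> continuous_map_compose [unfolded o_def] by (fastforce simp: singular_simplex_def)
  have "continuous_map ?Z (prod_topology (top_of_set {0..1}) X) (\<lambda>z. (z 0, \<sigma> (z \<circ> Suc)))"
    using time base by (simp add: continuous_map_pairwise o_def)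
  moreover have "prism_map h \<sigma> = h \<circ> (\<lambda>z. (z 0, \<sigma> (z \<circ> Suc)))"
    by (simp add: fun_eq_iff prism_map_def)
  ultimately show ?thesis
    using continuous_map_compose [OF _ h] by simp
qed

lemma singular_simplex_prism_simplex:
  assumes "continuous_map (prod_topology (top_of_set {0..1::real}) X) Y h"
    and "singular_simplex q X \<sigma>" and "i \<le> q"
  shows "singular_simplex (Suc q) Y (simplex_map (Suc q) (prism_map h \<sigma>) (prism_simplex q i))"
  using singular_simplex_simplex_map [OF simplicial_imp_singular_simplex [OF prism_simplex_in_cylinder]
      continuous_map_prism_map] assms by blast

lemma singular_chain_prism:
  assumes h: "continuous_map (prod_topology (top_of_set {0..1::real}) X) Y h"
    and c: "singular_chain q X c"
  shows "singular_chain (Suc q) Y (frag_extend (prism h q) c)"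
proof (intro singular_chain_extend)
  fix \<sigma>
  assume "\<sigma> \<in> Poly_Mapping.keys c"
  then have "singular_simplex q X \<sigma>"
    using c by (auto simp: singular_chain_def)
  then show "singular_chain (Suc q) Y (prism h q \<sigma>)"
    unfolding prism_def
    by (auto intro!: singular_chain_sum singular_chain_cmul singular_simplex_prism_simplex [OF h]
        simp: singular_chain_of)
qed

section \<open>Homotopy invariance of intersection homology\<close>

lemma FactGroup_iso_of_retraction:
  assumes N: "N \<lhd> G" and M: "M \<lhd> H" and f: "f \<in> hom G H" and g: "g \<in> hom H G"
    and fN: "f ` N \<subseteq> M" and gM: "g ` M \<subseteq> N"
    and fg: "\<And>y. y \<in> carrier H \<Longrightarrow> f (g y) = y"
    and gf: "\<And>x. x \<in> carrier G \<Longrightarrow> x \<otimes>\<^bsub>G\<^esub> inv\<^bsub>G\<^esub> g (f x) \<in> N"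
  shows "G Mod N \<cong> H Mod M"
proof -
  interpret G: group G
    using N by (simp add: normal_def)
  interpret H: group H
    using M by (simp add: normal_def)
  have M_sub: "subgroup M H" and N_sub: "subgroup N G"
    using M N by (simp_all add: normal_imp_subgroup)
  define \<Phi> where "\<Phi> = (\<lambda>x. M #>\<^bsub>H\<^esub> f x)"
  have hom: "\<Phi> \<in> hom G (H Mod M)"
    using hom_compose [OF f normal.r_coset_hom_Mod [OF M]] by (simp add: \<Phi>_def o_def)
  then interpret \<Phi>: group_hom G "H Mod M" \<Phi>
    by (simp add: group_hom_def group_hom_axioms_def normal.factorgroup_is_group [OF M])
  have f_carrier: "f x \<in> carrier H" if "x \<in> carrier G" for x
    using f that by (simp add: hom_def Pi_iff)
  have "M #>\<^bsub>H\<^esub> y = \<Phi> (g y)" "g y \<in> carrier G" if "y \<in> carrier H" for y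
    using that g by (simp_all add: \<Phi>_def fg hom_def Pi_iff)
  then have "carrier (H Mod M) \<subseteq> \<Phi> ` carrier G"
    by (auto simp: FactGroup_def RCOSETS_def)
  then have "\<Phi> ` carrier G = carrier (H Mod M)"
    using hom by (auto simp: hom_def)
  moreover have "kernel G (H Mod M) \<Phi> = N"
  proof
    show "kernel G (H Mod M) \<Phi> \<subseteq> N"
    proof
      fix x
      assume "x \<in> kernel G (H Mod M) \<Phi>"
      then have x: "x \<in> carrier G" and "M #>\<^bsub>H\<^esub> f x = M"
        by (auto simp: kernel_def \<Phi>_def)
      then have "g (f x) \<in> N"
        using H.coset_join1 M_sub f_carrier gM by blast
      then have "(x \<otimes>\<^bsub>G\<^esub> inv\<^bsub>G\<^esub> g (f x)) \<otimes>\<^bsub>G\<^esub> g (f x) \<in> N"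
        using gf [OF x] N_sub by (simp add: subgroup.m_closed)
      then show "x \<in> N"
        using x g f_carrier [OF x] by (simp add: G.m_assoc hom_def Pi_iff)
    qed
    show "N \<subseteq> kernel G (H Mod M) \<Phi>"
      using fN N_sub M_sub f_carrier H.coset_join2
      by (auto simp: kernel_def \<Phi>_def subgroup.subset [OF N_sub, THEN subsetD])
  qed
  ultimately show ?thesis
    using \<Phi>.FactGroup_iso by simp
qed

lemma skeleton_std_top: "skeleton_std i (int i) = standard_simplex i"
proof -
  have "card {l. l \<le> i \<and> x l \<noteq> 0} \<le> card {..i}" for x :: "nat \<Rightarrow> real"
    by (rule card_mono) auto
  then have "int (card {l. l \<le> i \<and> x l \<noteq> 0}) \<le> int i + 1" for x :: "nat \<Rightarrow> real"
    by (metis card_atMost of_nat_Suc of_nat_le_iff add.commute)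
  then show ?thesis
    by (auto simp: skeleton_std_def)
qed

text \<open>Strata of codimension 0 impose no condition since \<open>p 0 = 0\<close>, and the strata of
  codimension \<open>k\<close> cover \<open>\<Sigma>\<close>.\<close>

lemma allowable_simplex_iff:
  assumes p: "perversity p" and \<sigma>: "singular_simplex i X \<sigma>"
  shows "allowable_simplex p X \<Sigma> k i \<sigma>
     \<longleftrightarrow> {x \<in> standard_simplex i. \<sigma> x \<in> \<Sigma>} \<subseteq> skeleton_std i (int i - int k + p k)"
proof -
  have in_X: "\<sigma> x \<in> topspace X" if "x \<in> standard_simplex i" for x
    using \<sigma> that by (auto simp: singular_simplex_def continuous_map_def)
  have "\<Union> (connected_components_of (subtopology X \<Sigma>)) = topspace X \<inter> \<Sigma>"
    by (simp add: Union_connected_components_of)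
  then have "(\<forall>Z \<in> connected_components_of (subtopology X \<Sigma>).
                {x \<in> standard_simplex i. \<sigma> x \<in> Z} \<subseteq> skeleton_std i (int i - int k + p k))
           \<longleftrightarrow> {x \<in> standard_simplex i. \<sigma> x \<in> \<Sigma>} \<subseteq> skeleton_std i (int i - int k + p k)"
    using in_X by blast
  moreover have "p 0 = 0"
    using p by (simp add: perversity_def)
  ultimately show ?thesis
    by (simp add: allowable_simplex_def strata_def skeleton_std_top ball_Un)
qed

lemma allowable_simplex_simplex_map:
  assumes p: "perversity p" and \<sigma>: "singular_simplex i X \<sigma>" and f: "continuous_map X Y f"
    and f\<Sigma>: "\<And>x. x \<in> topspace X \<Longrightarrow> f x \<in> \<Sigma>' \<longleftrightarrow> x \<in> \<Sigma>"
    and allowable: "allowable_simplex p X \<Sigma> k i \<sigma>"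
  shows "allowable_simplex p Y \<Sigma>' k i (simplex_map i f \<sigma>)"
proof -
  have "{x \<in> standard_simplex i. simplex_map i f \<sigma> x \<in> \<Sigma>'} = {x \<in> standard_simplex i. \<sigma> x \<in> \<Sigma>}"
    using \<sigma> f\<Sigma> by (auto simp: simplex_map_def singular_simplex_def continuous_map_def)
  then show ?thesis
    using allowable
    by (simp add: allowable_simplex_iff [OF p \<sigma>] allowable_simplex_iff [OF p singular_simplex_simplex_map [OF \<sigma> f]])
qed

lemma allowable_chain_chain_map:
  assumes p: "perversity p" and c: "singular_chain i X c" and f: "continuous_map X Y f"
    and f\<Sigma>: "\<And>x. x \<in> topspace X \<Longrightarrow> f x \<in> \<Sigma>' \<longleftrightarrow> x \<in> \<Sigma>"
    and allowable: "allowable_chain p X \<Sigma> k i c"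
  shows "allowable_chain p Y \<Sigma>' k i (chain_map i f c)"
  unfolding allowable_chain_def
proof
  fix \<tau>
  assume "\<tau> \<in> Poly_Mapping.keys (chain_map i f c)"
  then obtain \<sigma> where "\<sigma> \<in> Poly_Mapping.keys c" "\<tau> = simplex_map i f \<sigma>"
    using keys_frag_extend [of "frag_of \<circ> simplex_map i f" c] by (auto simp: chain_map_def keys_frag_of)
  then show "allowable_simplex p Y \<Sigma>' k i \<tau>"
    using c allowable allowable_simplex_simplex_map [OF p _ f f\<Sigma>]
    by (auto simp: singular_chain_def allowable_chain_def)
qed

text \<open>A point \<open>x\<close> of the \<open>i\<close>-th prism simplex lies over the point \<open>simplicial_degeneracy i x\<close>
  of the base, whose support has at most one vertex less: raising the dimension of the simplex by
  one raises the dimension of the allowed skeleton by one as well.\<close>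

lemma allowable_simplex_prism_simplex:
  assumes p: "perversity p" and \<sigma>: "singular_simplex q X \<sigma>" and "i \<le> q"
    and h: "continuous_map (prod_topology (top_of_set {0..1::real}) X) Y h"
    and h\<Sigma>: "\<And>t x. t \<in> {0..1} \<Longrightarrow> x \<in> topspace X \<Longrightarrow> h (t, x) \<in> \<Sigma>' \<longleftrightarrow> x \<in> \<Sigma>"
    and allowable: "allowable_simplex p X \<Sigma> k q \<sigma>"
  shows "allowable_simplex p Y \<Sigma>' k (Suc q) (simplex_map (Suc q) (prism_map h \<sigma>) (prism_simplex q i))"
proof -
  let ?\<tau> = "simplex_map (Suc q) (prism_map h \<sigma>) (prism_simplex q i)"
  have "x \<in> skeleton_std (Suc q) (int (Suc q) - int k + p k)"
    if x: "x \<in> standard_simplex (Suc q)" and "?\<tau> x \<in> \<Sigma>'" for x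
  proof -
    let ?d = "simplicial_degeneracy i x"
    have d: "?d \<in> standard_simplex q"
      using simplicial_degeneracy_in_standard_simplex [OF \<open>i \<le> q\<close> x] .
    have "?\<tau> x = h (prism_simplex q i x 0, \<sigma> ?d)"
      using x by (simp add: simplex_map_def prism_map_def prism_simplex_base)
    then have "\<sigma> ?d \<in> \<Sigma>"
      using \<open>?\<tau> x \<in> \<Sigma>'\<close> h\<Sigma> prism_simplex_time [OF x] d \<sigma>
      by (auto simp: singular_simplex_def continuous_map_def)
    then have "?d \<in> skeleton_std q (int q - int k + p k)"
      using d allowable by (auto simp: allowable_simplex_iff [OF p \<sigma>])
    then have "int (card {n. n \<le> q \<and> ?d n \<noteq> 0}) \<le> int q - int k + p k + 1"
      by (simp add: skeleton_std_def)
    then show ?thesis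
      using x card_support_le_simplicial_degeneracy [OF \<open>i \<le> q\<close> x] by (simp add: skeleton_std_def)
  qed
  then show ?thesis
    by (auto simp: allowable_simplex_iff [OF p singular_simplex_prism_simplex [OF h \<sigma> \<open>i \<le> q\<close>]])
qed

lemma allowable_chain_prism:
  assumes p: "perversity p" and c: "singular_chain q X c"
    and h: "continuous_map (prod_topology (top_of_set {0..1::real}) X) Y h"
    and h\<Sigma>: "\<And>t x. t \<in> {0..1} \<Longrightarrow> x \<in> topspace X \<Longrightarrow> h (t, x) \<in> \<Sigma>' \<longleftrightarrow> x \<in> \<Sigma>"
    and allowable: "allowable_chain p X \<Sigma> k q c"
  shows "allowable_chain p Y \<Sigma>' k (Suc q) (frag_extend (prism h q) c)"
  unfolding allowable_chain_def
proof
  fix \<tau>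
  assume "\<tau> \<in> Poly_Mapping.keys (frag_extend (prism h q) c)"
  then obtain \<sigma> i where \<sigma>: "\<sigma> \<in> Poly_Mapping.keys c" and "i \<le> q"
    and \<tau>: "\<tau> = simplex_map (Suc q) (prism_map h \<sigma>) (prism_simplex q i)"
    using keys_frag_extend [of "prism h q" c] keys_sum
    by (fastforce simp: prism_def keys_frag_of dest!: subsetD [OF keys_cmul])
  moreover have "singular_simplex q X \<sigma>" "allowable_simplex p X \<Sigma> k q \<sigma>"
    using c allowable \<sigma> by (auto simp: singular_chain_def allowable_chain_def)
  ultimately show "allowable_simplex p Y \<Sigma>' k (Suc q) \<tau>"
    using allowable_simplex_prism_simplex [OF p _ _ h h\<Sigma>] by blast
qed

lemma allowable_chain_0 [simp]: "allowable_chain p X \<Sigma> k i 0"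
  by (simp add: allowable_chain_def)

lemma allowable_chain_minus [simp]: "allowable_chain p X \<Sigma> k i (- a) \<longleftrightarrow> allowable_chain p X \<Sigma> k i a"
  by (simp add: allowable_chain_def)

lemma allowable_chain_add:
  "allowable_chain p X \<Sigma> k i a \<Longrightarrow> allowable_chain p X \<Sigma> k i b \<Longrightarrow> allowable_chain p X \<Sigma> k i (a + b)"
  using keys_add [of a b] by (auto simp: allowable_chain_def)

lemma allowable_chain_diff:
  "allowable_chain p X \<Sigma> k i a \<Longrightarrow> allowable_chain p X \<Sigma> k i b \<Longrightarrow> allowable_chain p X \<Sigma> k i (a - b)"
  using keys_diff [of a b] by (auto simp: allowable_chain_def)

lemma IC_set_0: "0 \<in> IC_set p X \<Sigma> k i"
  by (simp add: IC_set_def)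

lemma IC_set_minus: "a \<in> IC_set p X \<Sigma> k i \<Longrightarrow> - a \<in> IC_set p X \<Sigma> k i"
  by (simp add: IC_set_def singular_chain_minus chain_boundary_minus)

lemma IC_set_add: "a \<in> IC_set p X \<Sigma> k i \<Longrightarrow> b \<in> IC_set p X \<Sigma> k i \<Longrightarrow> a + b \<in> IC_set p X \<Sigma> k i"
  by (simp add: IC_set_def singular_chain_add chain_boundary_add allowable_chain_add)

lemma subgroup_IC_cycles: "subgroup (IC_cycles p X \<Sigma> k i) (chain_group i X)"
proof
  show "IC_cycles p X \<Sigma> k i \<subseteq> carrier (chain_group i X)"
    by (auto simp: IC_cycles_def IC_set_def)
  show "x \<otimes>\<^bsub>chain_group i X\<^esub> y \<in> IC_cycles p X \<Sigma> k i"
    if "x \<in> IC_cycles p X \<Sigma> k i" "y \<in> IC_cycles p X \<Sigma> k i" for x y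
    using that by (simp add: IC_cycles_def IC_set_add chain_boundary_add)
  show "\<one>\<^bsub>chain_group i X\<^esub> \<in> IC_cycles p X \<Sigma> k i"
    by (simp add: IC_cycles_def IC_set_0)
  show "inv\<^bsub>chain_group i X\<^esub> x \<in> IC_cycles p X \<Sigma> k i" if "x \<in> IC_cycles p X \<Sigma> k i" for x
    using that by (auto simp: IC_cycles_def IC_set_def singular_chain_def IC_set_minus chain_boundary_minus)
qed

lemma IC_boundaries_subset_IC_cycles: "IC_boundaries p X \<Sigma> k i \<subseteq> IC_cycles p X \<Sigma> k i"
  by (auto simp: IC_boundaries_def IC_cycles_def IC_set_def singular_chain_boundary_alt
      chain_boundary_boundary_alt)

lemma IC_boundaries_minus: "a \<in> IC_boundaries p X \<Sigma> k i \<Longrightarrow> - a \<in> IC_boundaries p X \<Sigma> k i"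
  by (auto simp: IC_boundaries_def chain_boundary_minus [symmetric] intro!: imageI IC_set_minus)

lemma subgroup_IC_boundaries: "subgroup (IC_boundaries p X \<Sigma> k i) (chain_group i X)"
proof
  show "IC_boundaries p X \<Sigma> k i \<subseteq> carrier (chain_group i X)"
    using IC_boundaries_subset_IC_cycles subgroup.subset [OF subgroup_IC_cycles] by blast
  show "x \<otimes>\<^bsub>chain_group i X\<^esub> y \<in> IC_boundaries p X \<Sigma> k i"
    if "x \<in> IC_boundaries p X \<Sigma> k i" "y \<in> IC_boundaries p X \<Sigma> k i" for x y
    using that by (auto simp: IC_boundaries_def chain_boundary_add [symmetric] intro!: imageI IC_set_add)
  show "\<one>\<^bsub>chain_group i X\<^esub> \<in> IC_boundaries p X \<Sigma> k i"
    using IC_set_0 by (force simp: IC_boundaries_def)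
  show "inv\<^bsub>chain_group i X\<^esub> x \<in> IC_boundaries p X \<Sigma> k i" if "x \<in> IC_boundaries p X \<Sigma> k i" for x
  proof -
    have "Poly_Mapping.keys x \<subseteq> singular_simplex_set i X"
      using that IC_boundaries_subset_IC_cycles [of p X \<Sigma> k i]
      by (auto simp: IC_cycles_def IC_set_def singular_chain_def)
    then show ?thesis
      using that by (simp add: IC_boundaries_minus)
  qed
qed

lemma normal_IC_boundaries:
  "IC_boundaries p X \<Sigma> k i \<lhd> subgroup_generated (chain_group i X) (IC_cycles p X \<Sigma> k i)"
proof -
  have "comm_group (subgroup_generated (chain_group i X) (IC_cycles p X \<Sigma> k i))"
    by (rule group.abelian_subgroup_generated [OF group_chain_group abelian_chain_group])
  moreover have "subgroup (IC_boundaries p X \<Sigma> k i) (subgroup_generated (chain_group i X) (IC_cycles p X \<Sigma> k i))"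
    using subgroup_IC_boundaries [of p X \<Sigma> k i] IC_boundaries_subset_IC_cycles [of p X \<Sigma> k i]
    by (simp add: group.subgroup_subgroup_generated_iff subgroup.carrier_subgroup_generated_subgroup [OF subgroup_IC_cycles])
  ultimately show ?thesis
    by (rule comm_group.subgroup_imp_normal)
qed

lemma group_IH: "group (IH p i X \<Sigma> k)"
  unfolding IH_def by (rule normal.factorgroup_is_group [OF normal_IC_boundaries])

lemma IC_set_chain_map:
  assumes p: "perversity p" and \<xi>: "\<xi> \<in> IC_set p X \<Sigma> k i" and f: "continuous_map X Y f"
    and f\<Sigma>: "\<And>x. x \<in> topspace X \<Longrightarrow> f x \<in> \<Sigma>' \<longleftrightarrow> x \<in> \<Sigma>"
  shows "chain_map i f \<xi> \<in> IC_set p Y \<Sigma>' k i"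
proof -
  have c: "singular_chain i X \<xi>"
    using \<xi> by (simp add: IC_set_def)
  then have "singular_chain (i - 1) X (chain_boundary i \<xi>)"
    using singular_chain_boundary by simp
  then show ?thesis
    using \<xi> c singular_chain_chain_map [OF c f] chain_boundary_chain_map [OF c, of f]
      allowable_chain_chain_map [OF p _ f f\<Sigma>]
    by (simp add: IC_set_def)
qed

lemma IC_cycles_chain_map:
  assumes "perversity p" and "\<xi> \<in> IC_cycles p X \<Sigma> k i" and "continuous_map X Y f"
    and "\<And>x. x \<in> topspace X \<Longrightarrow> f x \<in> \<Sigma>' \<longleftrightarrow> x \<in> \<Sigma>"
  shows "chain_map i f \<xi> \<in> IC_cycles p Y \<Sigma>' k i"
proof -
  have "\<xi> \<in> IC_set p X \<Sigma> k i" "singular_chain i X \<xi>" "chain_boundary i \<xi> = 0"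
    using assms(2) by (auto simp: IC_cycles_def IC_set_def)
  then show ?thesis
    using IC_set_chain_map [OF assms(1) _ assms(3,4)]
    by (simp add: IC_cycles_def chain_boundary_chain_map)
qed

lemma IC_boundaries_chain_map:
  assumes "perversity p" and "\<xi> \<in> IC_boundaries p X \<Sigma> k i" and "continuous_map X Y f"
    and "\<And>x. x \<in> topspace X \<Longrightarrow> f x \<in> \<Sigma>' \<longleftrightarrow> x \<in> \<Sigma>"
  shows "chain_map i f \<xi> \<in> IC_boundaries p Y \<Sigma>' k i"
proof -
  obtain \<eta> where \<eta>: "\<eta> \<in> IC_set p X \<Sigma> k (Suc i)" "\<xi> = chain_boundary (Suc i) \<eta>"
    using assms(2) by (auto simp: IC_boundaries_def)
  then have "chain_map i f \<xi> = chain_boundary (Suc i) (chain_map (Suc i) f \<eta>)"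
    using chain_boundary_chain_map [of "Suc i" X \<eta> f] by (simp add: IC_set_def)
  then show ?thesis
    using IC_set_chain_map [OF assms(1) \<eta>(1) assms(3,4)] by (simp add: IC_boundaries_def)
qed

lemma homotopic_IC_cycles:
  assumes p: "perversity p" and \<xi>: "\<xi> \<in> IC_cycles p X \<Sigma> k i"
    and h: "continuous_map (prod_topology (top_of_set {0..1::real}) X) Y h"
    and h\<Sigma>: "\<And>t x. t \<in> {0..1} \<Longrightarrow> x \<in> topspace X \<Longrightarrow> h (t, x) \<in> \<Sigma>' \<longleftrightarrow> x \<in> \<Sigma>"
  shows "chain_map i (\<lambda>x. h (1, x)) \<xi> - chain_map i (\<lambda>x. h (0, x)) \<xi> \<in> IC_boundaries p Y \<Sigma>' k i"
proof -
  have c: "singular_chain i X \<xi>" and "chain_boundary i \<xi> = 0"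
    and allowable: "allowable_chain p X \<Sigma> k i \<xi>"
    using \<xi> by (auto simp: IC_cycles_def IC_set_def)
  then have boundary: "chain_boundary (Suc i) (frag_extend (prism h i) \<xi>)
      = chain_map i (\<lambda>x. h (1, x)) \<xi> - chain_map i (\<lambda>x. h (0, x)) \<xi>"
    by (simp add: chain_boundary_prism_chain)
  have "continuous_map X Y (\<lambda>x. h (t, x))" if "t \<in> {0..1}" for t
    using continuous_map_compose [OF _ h, of X "\<lambda>x. (t, x)"] that
    by (simp add: continuous_map_pairwise o_def)
  then have "allowable_chain p Y \<Sigma>' k i (chain_map i (\<lambda>x. h (t, x)) \<xi>)" if "t \<in> {0..1}" for t
    using allowable_chain_chain_map [OF p c _ _ allowable] h\<Sigma> that by blast
  then have "frag_extend (prism h i) \<xi> \<in> IC_set p Y \<Sigma>' k (Suc i)"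
    using boundary singular_chain_prism [OF h c] allowable_chain_prism [OF p c h h\<Sigma> allowable]
    by (simp add: IC_set_def allowable_chain_diff)
  then show ?thesis
    unfolding IC_boundaries_def boundary [symmetric] by (rule imageI)
qed

lemma IC_cycles_diff_homotopic:
  assumes p: "perversity p" and \<xi>: "\<xi> \<in> IC_cycles p X \<Sigma> k i"
    and h: "continuous_map (prod_topology (top_of_set {0..1::real}) X) X h"
    and h\<Sigma>: "\<And>t x. t \<in> {0..1} \<Longrightarrow> x \<in> topspace X \<Longrightarrow> h (t, x) \<in> \<Sigma> \<longleftrightarrow> x \<in> \<Sigma>"
    and h0: "\<And>x. x \<in> topspace X \<Longrightarrow> h (0, x) = x"
    and h1: "\<And>x. x \<in> topspace X \<Longrightarrow> h (1, x) = g x"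
  shows "\<xi> - chain_map i g \<xi> \<in> IC_boundaries p X \<Sigma> k i"
proof -
  have c: "singular_chain i X \<xi>"
    using \<xi> by (simp add: IC_cycles_def IC_set_def)
  have "chain_map i (\<lambda>x. h (1, x)) \<xi> - chain_map i (\<lambda>x. h (0, x)) \<xi> = - (\<xi> - chain_map i g \<xi>)"
    using chain_map_eq [OF c, of "\<lambda>x. h (1, x)" g] chain_map_id_gen [OF c, of "\<lambda>x. h (0, x)"]
    by (simp add: h0 h1)
  then show ?thesis
    using IC_boundaries_minus homotopic_IC_cycles [OF p \<xi> h h\<Sigma>] by fastforce
qed

lemma IH_iso_homotopy_retraction:
  assumes p: "perversity p"
    and r: "continuous_map X Y r" and j: "continuous_map Y X j"
    and r\<Sigma>: "\<And>x. x \<in> topspace X \<Longrightarrow> r x \<in> \<Sigma>Y \<longleftrightarrow> x \<in> \<Sigma>X"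
    and j\<Sigma>: "\<And>y. y \<in> topspace Y \<Longrightarrow> j y \<in> \<Sigma>X \<longleftrightarrow> y \<in> \<Sigma>Y"
    and rj: "\<And>y. y \<in> topspace Y \<Longrightarrow> r (j y) = y"
    and h: "continuous_map (prod_topology (top_of_set {0..1::real}) X) X h"
    and h\<Sigma>: "\<And>t x. t \<in> {0..1} \<Longrightarrow> x \<in> topspace X \<Longrightarrow> h (t, x) \<in> \<Sigma>X \<longleftrightarrow> x \<in> \<Sigma>X"
    and h0: "\<And>x. x \<in> topspace X \<Longrightarrow> h (0, x) = x"
    and h1: "\<And>x. x \<in> topspace X \<Longrightarrow> h (1, x) = j (r x)"
  shows "IH p i X \<Sigma>X k \<cong> IH p i Y \<Sigma>Y k"
  unfolding IH_def
proof (rule FactGroup_iso_of_retraction [OF normal_IC_boundaries normal_IC_boundaries])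
  let ?G = "subgroup_generated (chain_group i X) (IC_cycles p X \<Sigma>X k i)"
  let ?H = "subgroup_generated (chain_group i Y) (IC_cycles p Y \<Sigma>Y k i)"
  have carrier_G: "carrier ?G = IC_cycles p X \<Sigma>X k i"
    and carrier_H: "carrier ?H = IC_cycles p Y \<Sigma>Y k i"
    by (simp_all add: subgroup.carrier_subgroup_generated_subgroup [OF subgroup_IC_cycles])
  show "chain_map i r \<in> hom ?G ?H"
    using IC_cycles_chain_map [OF p _ r r\<Sigma>] by (auto simp: hom_def carrier_G carrier_H chain_map_add)
  show "chain_map i j \<in> hom ?H ?G"
    using IC_cycles_chain_map [OF p _ j j\<Sigma>] by (auto simp: hom_def carrier_G carrier_H chain_map_add)
  show "chain_map i r ` IC_boundaries p X \<Sigma>X k i \<subseteq> IC_boundaries p Y \<Sigma>Y k i"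
    using IC_boundaries_chain_map [OF p _ r r\<Sigma>] by blast
  show "chain_map i j ` IC_boundaries p Y \<Sigma>Y k i \<subseteq> IC_boundaries p X \<Sigma>X k i"
    using IC_boundaries_chain_map [OF p _ j j\<Sigma>] by blast
  show "chain_map i r (chain_map i j \<eta>) = \<eta>" if "\<eta> \<in> carrier ?H" for \<eta>
  proof -
    have "\<eta> \<in> IC_cycles p Y \<Sigma>Y k i"
      using that carrier_H by simp
    then have "singular_chain i Y \<eta>"
      by (simp add: IC_cycles_def IC_set_def)
    then have "chain_map i (r \<circ> j) \<eta> = \<eta>"
      by (rule chain_map_id_gen) (simp add: rj)
    then show ?thesis
      by (simp add: chain_map_compose)
  qed
  show "\<xi> \<otimes>\<^bsub>?G\<^esub> inv\<^bsub>?G\<^esub> chain_map i j (chain_map i r \<xi>) \<in> IC_boundaries p X \<Sigma>X k i"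
    if "\<xi> \<in> carrier ?G" for \<xi>
  proof -
    have \<xi>: "\<xi> \<in> IC_cycles p X \<Sigma>X k i"
      using that carrier_G by simp
    then have "chain_map i j (chain_map i r \<xi>) \<in> IC_cycles p X \<Sigma>X k i"
      using IC_cycles_chain_map [OF p IC_cycles_chain_map [OF p _ r r\<Sigma>] j j\<Sigma>] by blast
    then have "inv\<^bsub>?G\<^esub> chain_map i j (chain_map i r \<xi>) = - chain_map i j (chain_map i r \<xi>)"
      using group.inv_subgroup_generated [OF group_chain_group, of _ i X] carrier_G
      by (simp add: IC_cycles_def IC_set_def singular_chain_def)
    then show ?thesis
      using IC_cycles_diff_homotopic [OF p \<xi> h h\<Sigma> h0 h1]
      by (simp add: chain_map_compose [of i j r, unfolded o_def])
  qed
qed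

section \<open>Geometric realization\<close>

definition support :: "('v \<Rightarrow> real) \<Rightarrow> 'v set" where
  "support x = {v. x v \<noteq> 0}"

lemma simplicial_complex_face: "simplicial_complex K \<Longrightarrow> q \<in> K \<Longrightarrow> t \<subseteq> q \<Longrightarrow> t \<noteq> {} \<Longrightarrow> t \<in> K"
  unfolding simplicial_complex_def by blast

lemma simplicial_complex_finite: "simplicial_complex K \<Longrightarrow> q \<in> K \<Longrightarrow> finite q"
  unfolding simplicial_complex_def by blast

lemma simplex_pts_support:
  assumes "finite u" and x: "x \<in> simplex_pts u"
  shows "support x \<subseteq> u" "support x \<noteq> {}" "x \<in> simplex_pts (support x)"
proof -
  show sub: "support x \<subseteq> u"
    using x by (auto simp: support_def simplex_pts_def)
  have "sum x u = sum x (support x)"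
    by (rule sum.mono_neutral_right [OF \<open>finite u\<close> sub]) (auto simp: support_def)
  then have sum1: "sum x (support x) = 1"
    using x by (simp add: simplex_pts_def)
  then show "support x \<noteq> {}"
    by auto
  show "x \<in> simplex_pts (support x)"
    using x sum1 by (auto simp: simplex_pts_def support_def)
qed

lemma simplex_pts_mono:
  assumes "finite q" "f \<subseteq> q"
  shows "simplex_pts f \<subseteq> simplex_pts q"
proof
  fix x
  assume x: "x \<in> simplex_pts f"
  have "sum x q = sum x f"
    by (rule sum.mono_neutral_right [OF assms]) (use x in \<open>auto simp: simplex_pts_def\<close>)
  then show "x \<in> simplex_pts q"
    using x assms by (auto simp: simplex_pts_def)
qed

lemma mem_realization_set_iff:
  assumes "simplicial_complex K"
  shows "x \<in> realization_set K \<longleftrightarrow> support x \<in> K \<and> x \<in> simplex_pts (support x)"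
proof
  assume "x \<in> realization_set K"
  then obtain u where u: "u \<in> K" "x \<in> simplex_pts u"
    by (auto simp: realization_set_def)
  then show "support x \<in> K \<and> x \<in> simplex_pts (support x)"
    using simplex_pts_support [OF _ u(2)] simplicial_complex_face [OF assms u(1)]
      simplicial_complex_finite [OF assms u(1)] by blast
qed (auto simp: realization_set_def)

lemma simplex_pts_subset_realization_set: "q \<in> K \<Longrightarrow> simplex_pts q \<subseteq> realization_set K"
  by (auto simp: realization_set_def)

lemma openin_realization: "openin (realization K) = realization_open K"
  unfolding realization_def by (simp add: istopology_realization_open)

lemma topspace_realization: "topspace (realization K) = realization_set K"
proof -
  have "openin (subtopology (powertop_real UNIV) (simplex_pts s)) (realization_set K \<inter> simplex_pts s)"
    if "s \<in> K" for s
    using that openin_topspace [of "subtopology (powertop_real UNIV) (simplex_pts s)"]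
    by (simp add: realization_set_def Int_absorb1 UN_upper)
  then have "realization_open K (realization_set K)"
    by (auto simp: realization_open_def)
  then show ?thesis
    unfolding topspace_def openin_realization by (auto simp: realization_open_def)
qed

lemma closedin_realization:
  "closedin (realization K) A \<longleftrightarrow> A \<subseteq> realization_set K \<and>
     (\<forall>s\<in>K. closedin (subtopology (powertop_real UNIV) (simplex_pts s)) (A \<inter> simplex_pts s))"
proof -
  have "(realization_set K - A) \<inter> simplex_pts s = simplex_pts s - A \<inter> simplex_pts s" if "s \<in> K" for s
    using that by (auto simp: realization_set_def)
  then show ?thesis
    unfolding closedin_def topspace_realization openin_realization realization_open_def
    by (auto simp: Diff_Diff_Int Int_commute)
qed

lemma continuous_map_realization_powertop:
  fixes K :: "'v set set"
  shows "continuous_map (realization K) (powertop_real UNIV) (\<lambda>x. x)"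
  unfolding continuous_map_def
proof (intro conjI allI impI)
  fix W :: "('v \<Rightarrow> real) set"
  assume W: "openin (powertop_real UNIV) W"
  have "realization_set K \<inter> W \<inter> simplex_pts s = W \<inter> simplex_pts s" if "s \<in> K" for s
    using that by (auto simp: realization_set_def)
  then have "realization_open K (realization_set K \<inter> W)"
    using W by (auto simp: realization_open_def openin_subtopology)
  moreover have "{x \<in> topspace (realization K). x \<in> W} = realization_set K \<inter> W"
    by (auto simp: topspace_realization)
  ultimately show "openin (realization K) {x \<in> topspace (realization K). x \<in> W}"
    by (simp add: openin_realization)
qed simp

lemma continuous_map_simplex_pts_realization:
  assumes "q \<in> K"
  shows "continuous_map (subtopology (powertop_real UNIV) (simplex_pts q)) (realization K) (\<lambda>x. x)"
  unfolding continuous_map_def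
proof (intro conjI allI impI)
  show "(\<lambda>x. x) \<in> topspace (subtopology (powertop_real UNIV) (simplex_pts q)) \<rightarrow> topspace (realization K)"
    using assms by (auto simp: topspace_realization realization_set_def)
  fix U
  assume "openin (realization K) U"
  then have "openin (subtopology (powertop_real UNIV) (simplex_pts q)) (U \<inter> simplex_pts q)"
    using assms by (simp add: openin_realization realization_open_def)
  moreover have "{x \<in> topspace (subtopology (powertop_real UNIV) (simplex_pts q)). x \<in> U}
      = U \<inter> simplex_pts q"
    by auto
  ultimately show "openin (subtopology (powertop_real UNIV) (simplex_pts q))
      {x \<in> topspace (subtopology (powertop_real UNIV) (simplex_pts q)). x \<in> U}"
    by simp
qed

lemma closedin_simplex_pts:
  assumes "finite t"
  shows "closedin (powertop_real UNIV) (simplex_pts t)"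
proof -
  have proj: "continuous_map (powertop_real UNIV) euclideanreal (\<lambda>x. x v)" for v :: 'v
    by (rule continuous_map_product_projection) simp
  have coord: "closedin (powertop_real UNIV) {x. x v \<in> (if v \<in> t then {0..} else {0})}" for v
    using closedin_continuous_map_preimage [OF proj, of "if v \<in> t then {0..} else {0}" v] by simp
  have "continuous_map (powertop_real UNIV) euclideanreal (\<lambda>x. \<Sum>v\<in>t. x v)"
    using assms by (intro continuous_map_sum proj)
  then have total: "closedin (powertop_real UNIV) {x. sum x t \<in> {1}}"
    using closedin_continuous_map_preimage [of "powertop_real UNIV" euclideanreal "\<lambda>x. \<Sum>v\<in>t. x v" "{1}"] by simp
  have "simplex_pts t = (\<Inter>v. {x. x v \<in> (if v \<in> t then {0..} else {0})}) \<inter> {x. sum x t \<in> {1}}"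
    by (auto simp: simplex_pts_def split: if_splits) (metis order_refl)
  moreover have "closedin (powertop_real UNIV) (\<Inter>v. {x. x v \<in> (if v \<in> t then {0..} else {0})})"
    using coord by (intro closedin_Inter) auto
  ultimately show ?thesis
    using total by (simp add: closedin_Int)
qed

lemma closedin_realization_Int:
  assumes "closedin (powertop_real UNIV) B"
  shows "closedin (realization K) (realization_set K \<inter> B)"
  unfolding closedin_realization
proof (intro conjI ballI)
  fix s
  assume "s \<in> K"
  then have "realization_set K \<inter> B \<inter> simplex_pts s = B \<inter> simplex_pts s"
    by (auto simp: realization_set_def)
  then show "closedin (subtopology (powertop_real UNIV) (simplex_pts s)) (realization_set K \<inter> B \<inter> simplex_pts s)"
    using assms by (auto simp: closedin_subtopology)
qed simp

lemma Int_simplex_pts_eq_Union_faces: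
  assumes K': "simplicial_complex K'" and "A \<subseteq> realization_set K'" and "finite q"
  shows "A \<inter> simplex_pts q = (\<Union>f\<in>{f \<in> K'. f \<subseteq> q}. A \<inter> simplex_pts f)"
proof
  show "A \<inter> simplex_pts q \<subseteq> (\<Union>f\<in>{f \<in> K'. f \<subseteq> q}. A \<inter> simplex_pts f)"
  proof
    fix x
    assume x: "x \<in> A \<inter> simplex_pts q"
    then have "support x \<in> K'" "x \<in> simplex_pts (support x)"
      using assms mem_realization_set_iff [OF K'] by blast+
    moreover have "support x \<subseteq> q"
      using x simplex_pts_support [OF \<open>finite q\<close>] by blast
    ultimately show "x \<in> (\<Union>f\<in>{f \<in> K'. f \<subseteq> q}. A \<inter> simplex_pts f)"
      using x by auto
  qed
  show "(\<Union>f\<in>{f \<in> K'. f \<subseteq> q}. A \<inter> simplex_pts f) \<subseteq> A \<inter> simplex_pts q"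
    using simplex_pts_mono [OF \<open>finite q\<close>] by auto
qed

lemma closedin_realization_subcomplex:
  assumes K: "simplicial_complex K" and K': "simplicial_complex K'" and "K' \<subseteq> K"
    and A: "closedin (realization K') A"
  shows "closedin (realization K) A"
  unfolding closedin_realization
proof (intro conjI ballI)
  have A_sub: "A \<subseteq> realization_set K'"
    using A closedin_realization by blast
  then show "A \<subseteq> realization_set K"
    using \<open>K' \<subseteq> K\<close> by (auto simp: realization_set_def)
  fix q
  assume "q \<in> K"
  then have "finite q"
    using K simplicial_complex_finite by blast
  have "closedin (powertop_real UNIV) (A \<inter> simplex_pts f)" if "f \<in> K'" for f
  proof -
    have "closedin (subtopology (powertop_real UNIV) (simplex_pts f)) (A \<inter> simplex_pts f)"
      using A that by (simp add: closedin_realization)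
    then show ?thesis
      using closedin_trans_full closedin_simplex_pts simplicial_complex_finite [OF K' that] by blast
  qed
  moreover have "finite {f \<in> K'. f \<subseteq> q}"
    using \<open>finite q\<close> by (auto intro: finite_subset [of _ "Pow q"])
  ultimately have "closedin (powertop_real UNIV) (A \<inter> simplex_pts q)"
    unfolding Int_simplex_pts_eq_Union_faces [OF K' A_sub \<open>finite q\<close>] by (intro closedin_Union) auto
  then show "closedin (subtopology (powertop_real UNIV) (simplex_pts q)) (A \<inter> simplex_pts q)"
    by (simp add: closedin_subtopology) blast
qed

lemma realization_subcomplex:
  assumes K: "simplicial_complex K" and K': "simplicial_complex K'" and "K' \<subseteq> K"
  shows "realization K' = subtopology (realization K) (realization_set K')"
  unfolding topology_eq
proof (intro allI iffI)
  fix U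
  assume U: "openin (realization K') U"
  have U_sub: "U \<subseteq> realization_set K'"
    using openin_subset [OF U] by (simp add: topspace_realization)
  then have "closedin (realization K') (realization_set K' - U)"
    using U by (simp add: closedin_def topspace_realization double_diff)
  then have "openin (realization K) (realization_set K - (realization_set K' - U))"
    using closedin_realization_subcomplex [OF assms] by (simp add: closedin_def topspace_realization)
  moreover have "realization_set K' \<subseteq> realization_set K"
    using \<open>K' \<subseteq> K\<close> by (auto simp: realization_set_def)
  then have "U = (realization_set K - (realization_set K' - U)) \<inter> realization_set K'"
    using U_sub by blast
  ultimately show "openin (subtopology (realization K) (realization_set K')) U"
    by (auto simp: openin_subtopology)
next
  fix U
  assume "openin (subtopology (realization K) (realization_set K')) U"
  then obtain V where V: "realization_open K V" "U = V \<inter> realization_set K'"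
    by (auto simp: openin_subtopology openin_realization)
  have "U \<inter> simplex_pts q = V \<inter> simplex_pts q" if "q \<in> K'" for q
    using V that by (auto simp: realization_set_def)
  then have "realization_open K' U"
    using V \<open>K' \<subseteq> K\<close> by (auto simp: realization_open_def)
  then show "openin (realization K') U"
    by (simp add: openin_realization)
qed

section \<open>Elementary collapses\<close>

definition face_min :: "'v set \<Rightarrow> ('v \<Rightarrow> real) \<Rightarrow> real" where
  "face_min s x = Min ((\<lambda>v. x v) ` s)"

definition collapse_direction :: "'v set \<Rightarrow> 'v set \<Rightarrow> 'v \<Rightarrow> real" where
  "collapse_direction s p v = (if v \<in> p - s then real (card s) else if v \<in> s then -1 else 0)"

text \<open>At time \<open>t\<close> the homotopy moves \<open>t \<cdot> m\<close> of mass from each vertex of \<open>s\<close> to the apex of \<open>p\<close>,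
  where \<open>m\<close> is the smallest coordinate on \<open>s\<close>. Points outside the open star of \<open>s\<close> have
  \<open>m = 0\<close> and stay fixed, and at time 1 some coordinate on \<open>s\<close> has become zero.\<close>

definition collapse_homotopy :: "'v set \<Rightarrow> 'v set \<Rightarrow> real \<times> ('v \<Rightarrow> real) \<Rightarrow> 'v \<Rightarrow> real" where
  "collapse_homotopy s p z = (\<lambda>v. snd z v + fst z * face_min s (snd z) * collapse_direction s p v)"

lemma collapse_homotopy_0 [simp]: "collapse_homotopy s p (0, x) = x"
  by (simp add: collapse_homotopy_def)

lemma continuous_map_Min:
  assumes "finite s" "s \<noteq> {}" "\<And>v. v \<in> s \<Longrightarrow> continuous_map Z euclideanreal (f v)"
  shows "continuous_map Z euclideanreal (\<lambda>z. Min ((\<lambda>v. f v z) ` s))"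
  using assms
proof (induction s rule: finite_ne_induct)
  case (insert x F)
  then have "(\<lambda>z. Min ((\<lambda>v. f v z) ` insert x F)) = (\<lambda>z. min (f x z) (Min ((\<lambda>v. f v z) ` F)))"
    by (auto simp: Min_insert)
  then show ?case
    using insert by (simp add: continuous_map_real_min)
qed simp

lemma continuous_map_face_min:
  assumes "finite s" "s \<noteq> {}" "continuous_map Z (powertop_real UNIV) g"
  shows "continuous_map Z euclideanreal (\<lambda>z. face_min s (g z))"
  unfolding face_min_def
  using assms continuous_map_compose [OF assms(3) continuous_map_product_projection, unfolded o_def]
  by (intro continuous_map_Min) auto

lemma continuous_map_collapse_homotopy:
  assumes "finite s" "s \<noteq> {}" "continuous_map Z euclideanreal T" "continuous_map Z (powertop_real UNIV) g"
  shows "continuous_map Z (powertop_real UNIV) (\<lambda>z. collapse_homotopy s p (T z, g z))"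
  unfolding continuous_map_componentwise_UNIV collapse_homotopy_def
proof
  fix v
  have "continuous_map Z euclideanreal (\<lambda>z. g z v)"
    using continuous_map_compose [OF assms(4) continuous_map_product_projection] by (simp add: o_def)
  then show "continuous_map Z euclideanreal
      (\<lambda>z. snd (T z, g z) v + fst (T z, g z) * face_min s (snd (T z, g z)) * collapse_direction s p v)"
    using continuous_map_face_min [OF assms(1,2,4)] assms(3)
    by (simp add: continuous_map_add continuous_map_real_mult)
qed

lemma closedin_face_min_eq_0:
  assumes "finite s" "s \<noteq> {}"
  shows "closedin (powertop_real UNIV) {x. face_min s x = 0}"
  using closedin_continuous_map_preimage [OF continuous_map_face_min [OF assms continuous_map_id], of "{0}"]
  by (simp add: id_def)

locale elementary_collapse =
  fixes K :: "'v set set" and s p :: "'v set"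
  assumes complex: "simplicial_complex K" and free: "free_face K s p"
begin

abbreviation collapsed :: "'v set set" where
  "collapsed \<equiv> K - {s, p}"

lemma p_in_K: "p \<in> K"
  using free by (simp add: free_face_def principal_def)

lemma finite_p: "finite p"
  using simplicial_complex_finite [OF complex p_in_K] .

lemma s_psubset_p: "s \<subset> p"
  using free by (simp add: free_face_def)

lemma s_nonempty: "s \<noteq> {}"
  using free by (simp add: free_face_def)

lemma finite_s: "finite s"
  using finite_p s_psubset_p finite_subset by blast

lemma p_minus_s_singleton: "\<exists>w. p - s = {w}"
proof -
  obtain w where w: "w \<in> p" "w \<notin> s"
    using s_psubset_p by blast
  then have "insert w s \<in> K"
    using simplicial_complex_face [OF complex p_in_K, of "insert w s"] s_psubset_p by auto
  then have "insert w s = p"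
    using free w by (auto simp: free_face_def)
  then show ?thesis
    using w by blast
qed

definition apex :: 'v where
  "apex = the_elem (p - s)"

lemma apex: "apex \<in> p" "apex \<notin> s" "p = insert apex s"
  using p_minus_s_singleton s_psubset_p by (auto simp: apex_def)

lemma realization_set_nonneg: "x \<in> realization_set K \<Longrightarrow> 0 \<le> x v"
  by (auto simp: realization_set_def simplex_pts_def)

lemma face_min_nonneg: "x \<in> realization_set K \<Longrightarrow> 0 \<le> face_min s x"
  using finite_s s_nonempty realization_set_nonneg by (simp add: face_min_def)

lemma face_min_le: "v \<in> s \<Longrightarrow> face_min s x \<le> x v"
  using finite_s by (simp add: face_min_def)

lemma face_min_attained: "\<exists>v\<in>s. x v = face_min s x"
proof -
  have "face_min s x \<in> (\<lambda>v. x v) ` s"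
    unfolding face_min_def using finite_s s_nonempty by (intro Min_in) auto
  then show ?thesis
    by auto
qed

lemma face_min_pos_iff:
  assumes "x \<in> realization_set K"
  shows "0 < face_min s x \<longleftrightarrow> s \<subseteq> support x"
proof -
  have "0 < face_min s x \<longleftrightarrow> (\<forall>v\<in>s. 0 < x v)"
    using finite_s s_nonempty by (simp add: face_min_def)
  also have "\<dots> \<longleftrightarrow> s \<subseteq> support x"
    using realization_set_nonneg [OF assms] by (auto simp: support_def order_le_neq_trans)
  finally show ?thesis .
qed

lemma support_cases:
  assumes "x \<in> realization_set K" and "s \<subseteq> support x"
  shows "support x = s \<or> support x = p"
proof -
  have "support x \<in> K"
    using mem_realization_set_iff [OF complex] assms(1) by blast
  then show ?thesis
    using assms(2) free by (auto simp: free_face_def)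
qed

lemma mem_realization_collapsed_iff:
  assumes x: "x \<in> realization_set K"
  shows "x \<in> realization_set collapsed \<longleftrightarrow> face_min s x = 0"
proof -
  have sx: "support x \<in> K" "x \<in> simplex_pts (support x)"
    using mem_realization_set_iff [OF complex] x by auto
  have "x \<in> realization_set collapsed \<longleftrightarrow> support x \<in> collapsed"
  proof
    assume "x \<in> realization_set collapsed"
    then obtain u where u: "u \<in> collapsed" "x \<in> simplex_pts u"
      by (auto simp: realization_set_def)
    then have "support x \<subseteq> u"
      using simplex_pts_support(1) simplicial_complex_finite [OF complex] by blast
    show "support x \<in> collapsed"
    proof (rule ccontr)
      assume "support x \<notin> collapsed"
      then have "s \<subseteq> u"
        using sx \<open>support x \<subseteq> u\<close> s_psubset_p by auto
      then have "u = s \<or> u = p"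
        using u free by (auto simp: free_face_def)
      then show False
        using u by auto
    qed
  qed (use sx in \<open>auto simp: realization_set_def\<close>)
  also have "\<dots> \<longleftrightarrow> \<not> s \<subseteq> support x"
    using sx support_cases [OF x] s_psubset_p by auto
  also have "\<dots> \<longleftrightarrow> face_min s x = 0"
    using face_min_pos_iff [OF x] face_min_nonneg [OF x] by linarith
  finally show ?thesis .
qed

lemma realization_collapsed_subset: "realization_set collapsed \<subseteq> realization_set K"
  by (auto simp: realization_set_def)

lemma mem_simplex_p:
  assumes x: "x \<in> realization_set K" and "0 < face_min s x"
  shows "x \<in> simplex_pts p"
proof -
  have "support x \<subseteq> p"
    using support_cases [OF x] face_min_pos_iff [OF x] assms s_psubset_p by auto
  moreover have "x \<in> simplex_pts (support x)"
    using mem_realization_set_iff [OF complex] x by blast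
  ultimately show ?thesis
    using simplex_pts_mono [OF finite_p] by blast
qed

lemma realization_set_cases:
  assumes "x \<in> realization_set K"
  shows "x \<in> simplex_pts p \<or> x \<in> realization_set collapsed"
  using mem_simplex_p [OF assms] mem_realization_collapsed_iff [OF assms] face_min_nonneg [OF assms]
  by linarith

lemma collapse_homotopy_collapsed:
  assumes "y \<in> realization_set collapsed"
  shows "collapse_homotopy s p (t, y) = y"
  using assms mem_realization_collapsed_iff realization_collapsed_subset
  by (auto simp: collapse_homotopy_def)

lemma sum_collapse_direction: "(\<Sum>v\<in>p. collapse_direction s p v) = 0"
proof -
  have "p - {apex} = s"
    using apex by blast
  then have "(\<Sum>v\<in>p. collapse_direction s p v) = collapse_direction s p apex + (\<Sum>v\<in>s. collapse_direction s p v)"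
    using sum.remove [OF finite_p apex(1)] by metis
  then show ?thesis
    using apex(1,2) s_psubset_p by (simp add: collapse_direction_def)
qed

lemma collapse_homotopy_simplex_p:
  assumes x: "x \<in> realization_set K" and a: "0 < face_min s x" and t: "t \<in> {0..1}"
  shows "collapse_homotopy s p (t, x) \<in> simplex_pts p"
    and "0 < t \<Longrightarrow> apex \<in> support (collapse_homotopy s p (t, x))"
proof -
  have xp: "x \<in> simplex_pts p"
    using mem_simplex_p [OF x a] .
  let ?a = "face_min s x"
  let ?y = "collapse_homotopy s p (t, x)"
  have y: "?y v = x v + t * ?a * collapse_direction s p v" for v
    by (simp add: collapse_homotopy_def)
  have direction_apex: "collapse_direction s p apex = real (card s)"
    using apex by (auto simp: collapse_direction_def)
  have direction_s: "v \<in> s \<Longrightarrow> collapse_direction s p v = -1" for v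
    using s_psubset_p by (auto simp: collapse_direction_def)
  have "0 \<le> ?y v" for v
  proof (cases "v \<in> s")
    case True
    have "t * ?a \<le> ?a"
      using t a by (simp add: mult_le_cancel_right1)
    then have "t * ?a \<le> x v"
      using face_min_le [OF True, of x] by linarith
    then show ?thesis
      using y [of v] direction_s [OF True] by simp
  next
    case False
    then show ?thesis
      using y [of v] realization_set_nonneg [OF x, of v] t a by (simp add: collapse_direction_def)
  qed
  moreover have "?y v = 0" if "v \<notin> p" for v
    using xp that s_psubset_p y [of v] by (auto simp: simplex_pts_def collapse_direction_def)
  moreover have "sum ?y p = sum x p"
    using sum_collapse_direction by (simp add: y sum.distrib flip: sum_distrib_left)
  ultimately show "?y \<in> simplex_pts p"
    using xp by (simp add: simplex_pts_def)
  assume "0 < t"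
  then have "0 < t * ?a * real (card s)"
    using a finite_s s_nonempty by (simp add: card_gt_0_iff)
  then show "apex \<in> support ?y"
    using y [of apex] direction_apex realization_set_nonneg [OF x, of apex] by (simp add: support_def)
qed

lemma collapse_homotopy_cases:
  assumes x: "x \<in> realization_set K" and t: "t \<in> {0..1}"
  shows "collapse_homotopy s p (t, x) = x \<or>
         (s \<subseteq> support x \<and> x \<in> simplex_pts p \<and> collapse_homotopy s p (t, x) \<in> simplex_pts p
            \<and> apex \<in> support (collapse_homotopy s p (t, x)))"
proof (cases "face_min s x = 0 \<or> t = 0")
  case False
  then have "0 < face_min s x" "0 < t"
    using face_min_nonneg [OF x] t by auto
  then show ?thesis
    using face_min_pos_iff [OF x] mem_simplex_p [OF x] collapse_homotopy_simplex_p [OF x _ t] by blast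
qed (auto simp: collapse_homotopy_def)

lemma collapse_homotopy_in_realization:
  assumes "x \<in> realization_set K" and "t \<in> {0..1}"
  shows "collapse_homotopy s p (t, x) \<in> realization_set K"
  using collapse_homotopy_cases [OF assms] assms p_in_K by (auto simp: realization_set_def)

lemma collapse_homotopy_1_in_collapsed:
  assumes x: "x \<in> realization_set K"
  shows "collapse_homotopy s p (1, x) \<in> realization_set collapsed"
proof (cases "face_min s x = 0")
  case True
  then show ?thesis
    using x mem_realization_collapsed_iff by (simp add: collapse_homotopy_def)
next
  case False
  let ?y = "collapse_homotopy s p (1, x)"
  have y: "?y \<in> realization_set K"
    using collapse_homotopy_in_realization [OF x] by simp
  obtain v where v: "v \<in> s" "x v = face_min s x"
    using face_min_attained by blast
  then have "?y v = 0"
    using s_psubset_p by (auto simp: collapse_homotopy_def collapse_direction_def)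
  then have "face_min s ?y = 0"
    using v face_min_pos_iff [OF y] face_min_nonneg [OF y] by (auto simp: support_def)
  then show ?thesis
    using mem_realization_collapsed_iff [OF y] by simp
qed

lemma closedin_simplex_p: "closedin (realization K) (simplex_pts p)"
  using closedin_realization_Int [OF closedin_simplex_pts [OF finite_p], of K]
    simplex_pts_subset_realization_set [OF p_in_K] by (simp add: Int_absorb1)

lemma closedin_realization_collapsed: "closedin (realization K) (realization_set collapsed)"
proof -
  have "realization_set collapsed = realization_set K \<inter> {x. face_min s x = 0}"
    using mem_realization_collapsed_iff realization_collapsed_subset by blast
  then show ?thesis
    using closedin_realization_Int [OF closedin_face_min_eq_0 [OF finite_s s_nonempty]] by simp
qed

lemma continuous_map_collapse_homotopy_simplex_p:
  "continuous_map (subtopology (prod_topology (top_of_set {0..1::real}) (realization K)) ({0..1} \<times> simplex_pts p))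
     (realization K) (collapse_homotopy s p)"
proof -
  let ?Z = "prod_topology (subtopology (top_of_set {0..1::real}) {0..1}) (subtopology (realization K) (simplex_pts p))"
  have "continuous_map ?Z euclideanreal fst"
    using continuous_map_into_fulltopology [OF continuous_map_into_fulltopology [OF continuous_map_fst]] .
  moreover have "continuous_map ?Z (powertop_real UNIV) snd"
    using continuous_map_compose [OF continuous_map_into_fulltopology [OF continuous_map_snd]
        continuous_map_realization_powertop] by (simp add: o_def)
  ultimately have "continuous_map ?Z (powertop_real UNIV) (\<lambda>z. collapse_homotopy s p (fst z, snd z))"
    by (rule continuous_map_collapse_homotopy [OF finite_s s_nonempty])
  moreover have "collapse_homotopy s p z \<in> simplex_pts p" if "z \<in> topspace ?Z" for z
  proof -
    have "z \<in> {0..1} \<times> (realization_set K \<inter> simplex_pts p)"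
      using that by (simp add: topspace_realization)
    then obtain t x where "z = (t, x)" "t \<in> {0..1}" "x \<in> simplex_pts p" "x \<in> realization_set K"
      by auto
    then show ?thesis
      using collapse_homotopy_cases by fastforce
  qed
  ultimately have "continuous_map ?Z (subtopology (powertop_real UNIV) (simplex_pts p)) (collapse_homotopy s p)"
    by (auto simp: continuous_map_in_subtopology)
  then show ?thesis
    using continuous_map_compose [OF _ continuous_map_simplex_pts_realization [OF p_in_K]]
    by (simp add: o_def subtopology_Times)
qed

lemma continuous_map_collapse_homotopy_realization:
  "continuous_map (prod_topology (top_of_set {0..1::real}) (realization K)) (realization K)
     (collapse_homotopy s p)"
proof (rule pasting_lemma_closed [where I = "{True, False}" and f = "\<lambda>_. collapse_homotopy s p"
      and T = "\<lambda>b. {0..1} \<times> (if b then simplex_pts p else realization_set collapsed)"])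
  show "closedin (prod_topology (top_of_set {0..1::real}) (realization K))
          ({0..1} \<times> (if b then simplex_pts p else realization_set collapsed))" for b
    using closedin_simplex_p closedin_realization_collapsed by (auto simp: closedin_prod_Times_iff)
  show "\<exists>b. b \<in> {True, False} \<and> z \<in> {0..1} \<times> (if b then simplex_pts p else realization_set collapsed) \<and>
          collapse_homotopy s p z = collapse_homotopy s p z"
    if "z \<in> topspace (prod_topology (top_of_set {0..1::real}) (realization K))" for z
    using that realization_set_cases by (cases z) (auto simp: topspace_realization)
  have "continuous_map (subtopology (prod_topology (top_of_set {0..1::real}) (realization K))
          ({0..1} \<times> realization_set collapsed)) (realization K) (collapse_homotopy s p)"
    using continuous_map_from_subtopology [OF continuous_map_snd]
    by (rule continuous_map_eq) (auto simp: collapse_homotopy_collapsed)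
  then show "continuous_map (subtopology (prod_topology (top_of_set {0..1::real}) (realization K))
          ({0..1} \<times> (if b then simplex_pts p else realization_set collapsed))) (realization K)
          (collapse_homotopy s p)" for b
    using continuous_map_collapse_homotopy_simplex_p by (cases b) simp_all
qed auto

definition homotopy_preserves :: "'v set set \<Rightarrow> bool" where
  "homotopy_preserves S \<longleftrightarrow> (\<forall>t\<in>{0..1}. \<forall>x\<in>realization_set K.
     collapse_homotopy s p (t, x) \<in> realization_set S \<longleftrightarrow> x \<in> realization_set S)"

lemma IH_iso_collapse:
  assumes pv: "perversity pv" and collapsed: "simplicial_complex collapsed"
    and S: "simplicial_complex S" and S': "simplicial_complex S'"
    and same_faces: "\<And>f. f \<in> collapsed \<Longrightarrow> f \<in> S' \<longleftrightarrow> f \<in> S"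
    and preserves: "homotopy_preserves S"
  shows "IH pv i (realization K) (realization_set S) k \<cong> IH pv i (realization collapsed) (realization_set S') k"
proof -
  have S'_iff: "y \<in> realization_set S' \<longleftrightarrow> y \<in> realization_set S" if "y \<in> realization_set collapsed" for y
    using that same_faces mem_realization_set_iff [OF collapsed] mem_realization_set_iff [OF S]
      mem_realization_set_iff [OF S'] by blast
  have topology: "realization collapsed = subtopology (realization K) (realization_set collapsed)"
    by (rule realization_subcomplex [OF complex collapsed]) auto
  have "continuous_map (realization K) (realization K) (\<lambda>x. collapse_homotopy s p (1, x))"
    using continuous_map_compose [OF _ continuous_map_collapse_homotopy_realization, of _ "\<lambda>x. (1, x)"]
    by (simp add: continuous_map_pairwise o_def)
  then have r: "continuous_map (realization K) (realization collapsed) (\<lambda>x. collapse_homotopy s p (1, x))"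
    unfolding topology continuous_map_in_subtopology
    using collapse_homotopy_1_in_collapsed by (auto simp: topspace_realization)
  have j: "continuous_map (realization collapsed) (realization K) (\<lambda>y. y)"
    unfolding topology by (rule continuous_map_from_subtopology [OF continuous_map_id [unfolded id_def]])
  show ?thesis
  proof (rule IH_iso_homotopy_retraction [OF pv r j _ _ _ continuous_map_collapse_homotopy_realization])
    fix x
    assume "x \<in> topspace (realization K)"
    then have x: "x \<in> realization_set K"
      by (simp add: topspace_realization)
    show "collapse_homotopy s p (1, x) \<in> realization_set S' \<longleftrightarrow> x \<in> realization_set S"
      using S'_iff [OF collapse_homotopy_1_in_collapsed [OF x]] preserves x
      by (simp add: homotopy_preserves_def)
  next
    fix t :: real and x
    assume "t \<in> {0..1}" "x \<in> topspace (realization K)"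
    then show "collapse_homotopy s p (t, x) \<in> realization_set S \<longleftrightarrow> x \<in> realization_set S"
      using preserves by (simp add: homotopy_preserves_def topspace_realization)
  qed (simp_all add: topspace_realization S'_iff collapse_homotopy_collapsed)
qed

lemma homotopy_preserves_if_principal_in:
  assumes "p \<in> S"
  shows "homotopy_preserves S"
  unfolding homotopy_preserves_def
proof (intro ballI)
  fix t :: real and x
  assume "t \<in> {0..1}" "x \<in> realization_set K"
  then show "collapse_homotopy s p (t, x) \<in> realization_set S \<longleftrightarrow> x \<in> realization_set S"
    using collapse_homotopy_cases [of x t] simplex_pts_subset_realization_set [OF assms] by auto
qed

lemma homotopy_preserves_if_disjoint:
  assumes S: "simplicial_complex S" and C: "simplicial_complex C" and "p \<in> C" and "C \<inter> S = {}"
  shows "homotopy_preserves S"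
proof -
  have "y \<notin> realization_set S" if "y \<in> simplex_pts p" for y
  proof
    assume "y \<in> realization_set S"
    then have "support y \<in> S"
      using mem_realization_set_iff [OF S] by blast
    moreover have "support y \<in> C"
      using simplicial_complex_face [OF C \<open>p \<in> C\<close>] simplex_pts_support [OF finite_p that] by blast
    ultimately show False
      using \<open>C \<inter> S = {}\<close> by blast
  qed
  then show ?thesis
    unfolding homotopy_preserves_def using collapse_homotopy_cases by metis
qed

lemma homotopy_preserves_if_faces_below:
  assumes S: "simplicial_complex S" and below: "\<forall>q\<in>S. q \<subset> p \<longrightarrow> q \<subset> s"
  shows "homotopy_preserves S"
proof -
  have "s \<notin> S"
    using below s_psubset_p by blast
  then have moving: "x \<notin> realization_set S" if "s \<subseteq> support x" for x
    using that mem_realization_set_iff [OF S] simplicial_complex_face [OF S _ _ s_nonempty] by blast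
  have "{apex} \<notin> S"
  proof
    assume "{apex} \<in> S"
    moreover have "{apex} \<subset> p"
    proof -
      obtain v where "v \<in> s"
        using s_nonempty by blast
      then have "v \<in> p" "v \<noteq> apex"
        using apex(2) s_psubset_p by auto
      then show ?thesis
        using apex(1) by (intro psubsetI) auto
    qed
    ultimately show False
      using below apex by blast
  qed
  then have moved: "y \<notin> realization_set S" if "apex \<in> support y" for y
    using that mem_realization_set_iff [OF S] simplicial_complex_face [OF S, of "support y" "{apex}"] by blast
  show ?thesis
    unfolding homotopy_preserves_def
    using collapse_homotopy_cases moving moved by metis
qed

end

section \<open>Layered formal deformations\<close>

lemma IH_iso_elem_layered_collapse:
  assumes p: "perversity p" and L: "layered_complex (K, C, S)" and L': "layered_complex (K', C', S')"
    and collapse: "elem_layered_collapse (K, C, S) (K', C', S')"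
  shows "IH p i (realization K) (realization_set S) k \<cong> IH p i (realization K') (realization_set S') k"
proof -
  have K: "simplicial_complex K" and C: "simplicial_complex C" and S: "simplicial_complex S"
    and CS: "C \<inter> S = {}" and K': "simplicial_complex K'" and S': "simplicial_complex S'"
    using L L' by (auto simp: layered_complex_def subcomplex_def)
  from collapse consider
      (S_collapse) s q where "q \<in> S" "free_face K s q" "K' = K - {s, q}" "S' = S - {s, q}"
    | (C_collapse) s q where "q \<in> C" "free_face K s q" "K' = K - {s, q}" "S' = S"
    | (intermediate) s q where "free_face K s q" "\<forall>t\<in>S. t \<subset> q \<longrightarrow> t \<subset> s" "K' = K - {s, q}" "S' = S"
    unfolding elem_layered_collapse_def elem_S_collapse_def elem_C_collapse_def
      elem_intermediate_collapse_def by auto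
  then show ?thesis
  proof cases
    case S_collapse
    interpret elementary_collapse K s q
      using K S_collapse by unfold_locales
    show ?thesis
      using S_collapse K' S'
      by (auto intro!: IH_iso_collapse [OF p _ S] homotopy_preserves_if_principal_in)
  next
    case C_collapse
    interpret elementary_collapse K s q
      using K C_collapse by unfold_locales
    show ?thesis
      using C_collapse K'
      by (auto intro!: IH_iso_collapse [OF p _ S S] homotopy_preserves_if_disjoint [OF S C _ CS])
  next
    case intermediate
    interpret elementary_collapse K s q
      using K intermediate by unfold_locales
    show ?thesis
      using intermediate K'
      by (auto intro!: IH_iso_collapse [OF p _ S S] homotopy_preserves_if_faces_below [OF S])
  qed
qed

lemma IH_iso_layered_formal_deformation:
  fixes L L' :: "'v layered"
  assumes p: "perversity p" and "layered_formal_deformation L L'"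
  shows "IH p i (realization (fst L)) (realization_set (snd (snd L))) k
       \<cong> IH p i (realization (fst L')) (realization_set (snd (snd L'))) k"
proof -
  define F where "F M = IH p i (realization (fst M)) (realization_set (snd (snd M))) k" for M :: "'v layered"
  obtain xs where xs: "xs \<noteq> []" "hd xs = L" "last xs = L'" "\<forall>M\<in>set xs. layered_complex M"
    and steps: "\<And>n. Suc n < length xs \<Longrightarrow> elem_layered_collapse (xs ! n) (xs ! Suc n) \<or>
                                          elem_layered_collapse (xs ! Suc n) (xs ! n)"
    using assms unfolding layered_formal_deformation_def by blast
  have step: "F M \<cong> F M'" if "layered_complex M" "layered_complex M'" "elem_layered_collapse M M'" for M M'
    using that IH_iso_elem_layered_collapse [OF p, of "fst M" "fst (snd M)" "snd (snd M)"
        "fst M'" "fst (snd M')" "snd (snd M')"]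
    by (simp add: F_def)
  have "F (xs ! 0) \<cong> F (xs ! n)" if "n < length xs" for n
    using that
  proof (induction n)
    case (Suc n)
    have "layered_complex (xs ! n)" "layered_complex (xs ! Suc n)"
      using xs(4) Suc.prems by auto
    then have "F (xs ! n) \<cong> F (xs ! Suc n)"
      using steps [OF Suc.prems] step group.iso_sym [OF group_IH] unfolding F_def by blast
    then show ?case
      using Suc iso_trans by (metis Suc_lessD)
  qed simp
  then have "F (xs ! 0) \<cong> F (xs ! (length xs - 1))"
    using xs(1) by simp
  then show ?thesis
    using xs(1-3) by (simp add: F_def hd_conv_nth last_conv_nth)
qed

theorem corollary6p4:
  fixes K K' :: "'v set set" and S0 S0' :: "'v set" and n n' k :: nat
  assumes "divided_complex K S0" and "divided_complex K' S0'"
    and "filtered_space (realization K) (realization_set (S_part K S0)) n k"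
    and "filtered_space (realization K') (realization_set (S_part K' S0')) n' k"
    and "layered_formal_deformation (assoc_layered K S0) (assoc_layered K' S0')"
  shows "\<forall>p. perversity p \<longrightarrow> (\<forall>i.
           IH p i (realization K) (realization_set (S_part K S0)) k \<cong>
           IH p i (realization K') (realization_set (S_part K' S0')) k)"
  using IH_iso_layered_formal_deformation [OF _ assms(5)] by (simp add: assoc_layered_def)

end
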